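(* Let $R=\bigoplus_{\alpha\in\Gamma}R_{\alpha}$ be a graded integral domain and let $\star$ be a semistar operation on $R$ such that $R^{\star}\subsetneq R_H$. Then for each nonzero finitely generated homogeneous ideal $I$ of $R$, $I$ is $\star_f$-invertible if and only if $I\,\mathrm{NA}(R,\star)$ is invertible.
   Context: $\Gamma$ is a commutative cancellative monoid (written additively) whose quotient group $\langle\Gamma\rangle$ is torsion-free. A graded integral domain $R=\bigoplus_{\alpha\in\Gamma}R_\alpha$ is an integral domain that is the direct sum of additive subgroups $R_\alpha$ with $R_\alpha R_\beta\subseteq R_{\alpha+\beta}$. $K$ is its quotient field, $H$ the set of nonzero homogeneous elements of $R$, $R_H$ the homogeneous quotient field. An ideal $I$ is homogeneous if $I=\bigoplus_\alpha(I\cap R_\alpha)$. For $a\in R$, $C(a)$ is the ideal generated by the homogeneous components of $a$; for $f=f_0+\cdots+f_nX^n\in R[X]$, $A_f:=\sum_i C(f_i)$. A semistar operation on $R$ is a map $\star$ from the set of nonzero $R$-submodules of $K$ to itself such that for all $0\ne x\in K$ and $E,F$: $(xE)^\star=xE^\star$; $E\subseteq F\Rightarrow E^\star\subseteq F^\star$; $E\subseteq E^\star$; $(E^\star)^\star=E^\star$. $\star_f$ is defined by $E^{\star_f}=\bigcup\{F^\star: F\subseteq E, F$ a nonzero finitely generated fractional ideal$\}$. A nonzero fractional ideal $I$ is $\star_f$-invertible if $(I(R:I))^{\star_f}=R^\star$, where $(R:I)=\{x\in K: xI\subseteq R\}$. $N(\star):=\{f\in R[X]: f\ne0,\ A_f^\star=R^\star\}$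 and $\mathrm{NA}(R,\star):=R[X]_{N(\star)}$. *)

theory Defs
  imports "HOL-Computational_Algebra.Polynomial" "HOL-Computational_Algebra.Fraction_Field"
begin

definition lin_comb :: "'a::comm_ring_1 set \<Rightarrow> 'a set \<Rightarrow> 'a set" where
  "lin_comb A S = {x. \<exists>T c. finite T \<and> T \<subseteq> S \<and> (\<forall>t\<in>T. c t \<in> A) \<and> x = (\<Sum>t\<in>T. c t * t)}"

definition is_subring :: "'a::comm_ring_1 set \<Rightarrow> bool" where
  "is_subring A \<longleftrightarrow> 1 \<in> A \<and> 0 \<in> A \<and> (\<forall>x\<in>A. \<forall>y\<in>A. x + y \<in> A \<and> x * y \<in> A \<and> - x \<in> A)"

text \<open>A-submodule of the ambient ring (the ambient field plays the role of K).\<close>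
definition is_submod :: "'a::comm_ring_1 set \<Rightarrow> 'a set \<Rightarrow> bool" where
  "is_submod A E \<longleftrightarrow> 0 \<in> E \<and> (\<forall>x\<in>E. \<forall>y\<in>E. x + y \<in> E) \<and> (\<forall>r\<in>A. \<forall>x\<in>E. r * x \<in> E)"

definition nz_submod :: "'a::comm_ring_1 set \<Rightarrow> 'a set \<Rightarrow> bool" where
  "nz_submod A E \<longleftrightarrow> is_submod A E \<and> E \<noteq> {0}"

definition is_ideal :: "'a::comm_ring_1 set \<Rightarrow> 'a set \<Rightarrow> bool" where
  "is_ideal A I \<longleftrightarrow> is_submod A I \<and> I \<subseteq> A"

definition nz_frac_ideal :: "'a::comm_ring_1 set \<Rightarrow> 'a set \<Rightarrow> bool" where
  "nz_frac_ideal A E \<longleftrightarrow> nz_submod A E \<and> (\<exists>d\<in>A. d \<noteq> 0 \<and> (\<forall>x\<in>E. d * x \<in> A))"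

definition fin_gen :: "'a::comm_ring_1 set \<Rightarrow> 'a set \<Rightarrow> bool" where
  "fin_gen A E \<longleftrightarrow> (\<exists>S. finite S \<and> E = lin_comb A S)"

definition submod_mult :: "'a::comm_ring_1 set \<Rightarrow> 'a set \<Rightarrow> 'a set \<Rightarrow> 'a set" where
  "submod_mult A E F = lin_comb A {x * y | x y. x \<in> E \<and> y \<in> F}"

definition colon :: "'a::comm_ring_1 set \<Rightarrow> 'a set \<Rightarrow> 'a set" where
  "colon A E = {x. \<forall>y\<in>E. x * y \<in> A}"

definition invertible_ideal :: "'a::comm_ring_1 set \<Rightarrow> 'a set \<Rightarrow> bool" where
  "invertible_ideal A J \<longleftrightarrow> nz_frac_ideal A J \<and> submod_mult A J (colon A J) = A"

text \<open>Torsion-freeness of the quotient group of a cancellative commutative monoid: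
  n(a - b) = 0 with n \<ge> 1 forces a = b, i.e. n a = n b implies a = b.\<close>
definition torsion_free_quot :: "'g::cancel_comm_monoid_add itself \<Rightarrow> bool" where
  "torsion_free_quot _ \<longleftrightarrow>
     (\<forall>n::nat. \<forall>a b::'g. n > 0 \<longrightarrow> (\<Sum>i<n. a) = (\<Sum>i<n. b) \<longrightarrow> a = b)"

definition fin_supp :: "('g \<Rightarrow> 'k::zero) \<Rightarrow> bool" where
  "fin_supp f \<longleftrightarrow> finite {\<alpha>. f \<alpha> \<noteq> 0}"

definition hom_decomp :: "('g \<Rightarrow> 'k::field set) \<Rightarrow> ('g \<Rightarrow> 'k) \<Rightarrow> 'k \<Rightarrow> bool" where
  "hom_decomp Rg f x \<longleftrightarrow> fin_supp f \<and> (\<forall>\<alpha>. f \<alpha> \<in> Rg \<alpha>) \<and> x = (\<Sum>\<alpha>\<in>{\<alpha>. f \<alpha> \<noteq> 0}. f \<alpha>)"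

text \<open>R (a subring of the field 'k, which is its quotient field) is a graded integral domain
  R = \<Oplus> R_\<alpha> with R_\<alpha> = Rg \<alpha>.\<close>
definition graded_domain :: "'k::field set \<Rightarrow> ('g::cancel_comm_monoid_add \<Rightarrow> 'k set) \<Rightarrow> bool" where
  "graded_domain R Rg \<longleftrightarrow>
     torsion_free_quot TYPE('g) \<and>
     is_subring R \<and>
     (\<forall>x. \<exists>a\<in>R. \<exists>b\<in>R. b \<noteq> 0 \<and> x = a / b) \<and>
     (\<forall>\<alpha>. Rg \<alpha> \<subseteq> R \<and> 0 \<in> Rg \<alpha> \<and> (\<forall>x\<in>Rg \<alpha>. \<forall>y\<in>Rg \<alpha>. x + y \<in> Rg \<alpha> \<and> - x \<in> Rg \<alpha>)) \<and>
     (\<forall>\<alpha> \<beta>. \<forall>x\<in>Rg \<alpha>. \<forall>y\<in>Rg \<beta>. x * y \<in> Rg (\<alpha> + \<beta>)) \<and>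
     (\<forall>x\<in>R. \<exists>f. hom_decomp Rg f x) \<and>
     (\<forall>f g x. hom_decomp Rg f x \<longrightarrow> hom_decomp Rg g x \<longrightarrow> f = g)"

definition hom_elems :: "('g \<Rightarrow> 'k::field set) \<Rightarrow> 'k set" where
  "hom_elems Rg = (\<Union>\<alpha>. Rg \<alpha>) - {0}"

definition hom_quot_field :: "'k::field set \<Rightarrow> ('g \<Rightarrow> 'k set) \<Rightarrow> 'k set" where
  "hom_quot_field R Rg = {a / h | a h. a \<in> R \<and> h \<in> hom_elems Rg}"

definition hom_ideal :: "'k::field set \<Rightarrow> ('g \<Rightarrow> 'k set) \<Rightarrow> 'k set \<Rightarrow> bool" where
  "hom_ideal R Rg I \<longleftrightarrow> is_ideal R I \<and>
     (\<forall>x\<in>I. \<exists>f. hom_decomp (\<lambda>\<alpha>. I \<inter> Rg \<alpha>) f x)"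

definition hom_comps :: "('g \<Rightarrow> 'k::field set) \<Rightarrow> 'k \<Rightarrow> 'k set" where
  "hom_comps Rg x = {y. \<exists>f \<alpha>. hom_decomp Rg f x \<and> y = f \<alpha>}"

definition content_C :: "'k::field set \<Rightarrow> ('g \<Rightarrow> 'k set) \<Rightarrow> 'k \<Rightarrow> 'k set" where
  "content_C R Rg x = lin_comb R (hom_comps Rg x)"

definition content_A :: "'k::field set \<Rightarrow> ('g \<Rightarrow> 'k set) \<Rightarrow> 'k poly \<Rightarrow> 'k set" where
  "content_A R Rg p = lin_comb R (\<Union>i\<le>degree p. content_C R Rg (coeff p i))"

definition scal :: "'k::field \<Rightarrow> 'k set \<Rightarrow> 'k set" where
  "scal x E = (\<lambda>e. x * e) ` E"

definition semistar :: "'k::field set \<Rightarrow> ('k set \<Rightarrow> 'k set) \<Rightarrow> bool" where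
  "semistar R st \<longleftrightarrow>
     (\<forall>E. nz_submod R E \<longrightarrow> nz_submod R (st E)) \<and>
     (\<forall>x E. x \<noteq> 0 \<longrightarrow> nz_submod R E \<longrightarrow> st (scal x E) = scal x (st E)) \<and>
     (\<forall>E F. nz_submod R E \<longrightarrow> nz_submod R F \<longrightarrow> E \<subseteq> F \<longrightarrow> st E \<subseteq> st F) \<and>
     (\<forall>E. nz_submod R E \<longrightarrow> E \<subseteq> st E) \<and>
     (\<forall>E. nz_submod R E \<longrightarrow> st (st E) = st E)"

definition star_f :: "'k::field set \<Rightarrow> ('k set \<Rightarrow> 'k set) \<Rightarrow> 'k set \<Rightarrow> 'k set" where
  "star_f R st E = \<Union>{st F | F. F \<subseteq> E \<and> nz_frac_ideal R F \<and> fin_gen R F}"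

definition star_f_invertible :: "'k::field set \<Rightarrow> ('k set \<Rightarrow> 'k set) \<Rightarrow> 'k set \<Rightarrow> bool" where
  "star_f_invertible R st I \<longleftrightarrow>
     nz_frac_ideal R I \<and> star_f R st (submod_mult R I (colon R I)) = st R"

definition poly_over :: "'k::field set \<Rightarrow> 'k poly set" where
  "poly_over R = {p. \<forall>i. coeff p i \<in> R}"

definition N_star :: "'k::field set \<Rightarrow> ('g \<Rightarrow> 'k set) \<Rightarrow> ('k set \<Rightarrow> 'k set) \<Rightarrow> 'k poly set" where
  "N_star R Rg st = {f \<in> poly_over R. f \<noteq> 0 \<and> st (content_A R Rg f) = st R}"

text \<open>NA(R,star) = R[X]_{N(star)}, as a subring of K(X) = 'k poly fract.\<close>
definition NA :: "'k::field set \<Rightarrow> ('g \<Rightarrow> 'k set) \<Rightarrow> ('k set \<Rightarrow> 'k set) \<Rightarrow> 'k poly fract set" where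
  "NA R Rg st = {Fract f g | f g. f \<in> poly_over R \<and> g \<in> N_star R Rg st}"

definition ext_NA :: "'k::field set \<Rightarrow> ('g \<Rightarrow> 'k set) \<Rightarrow> ('k set \<Rightarrow> 'k set) \<Rightarrow> 'k set \<Rightarrow> 'k poly fract set" where
  "ext_NA R Rg st I = lin_comb (NA R Rg st) ((\<lambda>a. Fract [:a:] 1) ` I)"

end

theory Submission
  imports Defs
begin

text \<open>
  The heart of the matter is that N(star) is multiplicatively closed, so that NA(R, star) is a
  ring. If the star-closure of A_fg were not R^star, Zorn's lemma would give a homogeneous ideal
  P containing A_fg, maximal with 1 not in its star_f-closure. Such a P is prime for homogeneous
  elements, hence prime: compare lowest components with respect to a total order on the grading
  monoid, which exists because its quotient group is torsion-free. Gauss' lemma modulo P then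
  puts a coefficient of f or of g outside P, contradicting (A_f)^star = R^star = (A_g)^star.

  Both directions of the equivalence pass through a polynomial in N(star) with all coefficients
  in I (R : I). If I is star_f-invertible, take f with coefficients generating an ideal F inside
  I (R : I) with 1 in F^star; then 1 = f / f is a sum of terms c X^i / f in I NA (NA : I NA).
  Conversely, from 1 = sum a_k w_k with a_k in I and w_k in (NA : I NA), clearing denominators by
  some s in N(star) makes every s w_k a polynomial with coefficients in (R : I), so s has its
  coefficients in I (R : I). As I is homogeneous so is I (R : I), hence A_s lies in it and
  (I (R : I))^star_f = R^star.
\<close>

section \<open>Isolated orders on a cancellative monoid\<close>

definition nsmul :: "nat \<Rightarrow> 'g::comm_monoid_add \<Rightarrow> 'g" where
  "nsmul n a = (\<Sum>i<n. a)"

lemma nsmul_0 [simp]: "nsmul 0 a = 0"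
  by (simp add: nsmul_def)

lemma nsmul_Suc [simp]: "nsmul (Suc n) a = nsmul n a + a"
  by (simp add: nsmul_def)

lemma nsmul_1 [simp]: "nsmul 1 a = a"
  by (simp add: nsmul_def)

lemma nsmul_add: "nsmul (n + m) a = nsmul n a + nsmul m a"
  by (induction m) (simp_all add: add.assoc)

lemma nsmul_add_right: "nsmul n (a + b) = nsmul n a + nsmul n b"
  by (simp add: nsmul_def sum.distrib)

lemma nsmul_nsmul: "nsmul n (nsmul m a) = nsmul (n * m) a"
  by (induction n) (simp_all add: nsmul_add add.commute)

definition isolated_order :: "('g::cancel_comm_monoid_add \<times> 'g) set \<Rightarrow> bool" where
  "isolated_order r \<longleftrightarrow> (\<forall>x. (x, x) \<in> r)
     \<and> (\<forall>x y z. (x, y) \<in> r \<longrightarrow> (y, z) \<in> r \<longrightarrow> (x, z) \<in> r)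
     \<and> (\<forall>x y. (x, y) \<in> r \<longrightarrow> (y, x) \<in> r \<longrightarrow> x = y)
     \<and> (\<forall>x y c. (x, y) \<in> r \<longleftrightarrow> (x + c, y + c) \<in> r)
     \<and> (\<forall>n x y. n > 0 \<longrightarrow> (nsmul n x, nsmul n y) \<in> r \<longrightarrow> (x, y) \<in> r)"

lemma
  assumes "isolated_order r"
  shows isolated_order_refl: "(x, x) \<in> r"
    and isolated_order_trans: "(x, y) \<in> r \<Longrightarrow> (y, z) \<in> r \<Longrightarrow> (x, z) \<in> r"
    and isolated_order_antisym: "(x, y) \<in> r \<Longrightarrow> (y, x) \<in> r \<Longrightarrow> x = y"
    and isolated_order_add_right_iff: "(x + c, y + c) \<in> r \<longleftrightarrow> (x, y) \<in> r"
    and isolated_order_nsmul_cancel: "n > 0 \<Longrightarrow> (nsmul n x, nsmul n y) \<in> r \<Longrightarrow> (x, y) \<in> r"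
  using assms unfolding isolated_order_def by blast+

lemma isolated_orderI:
  assumes "\<And>x. (x, x) \<in> r" "\<And>x y z. (x, y) \<in> r \<Longrightarrow> (y, z) \<in> r \<Longrightarrow> (x, z) \<in> r"
    "\<And>x y. (x, y) \<in> r \<Longrightarrow> (y, x) \<in> r \<Longrightarrow> x = y"
    "\<And>x y c. (x + c, y + c) \<in> r \<longleftrightarrow> (x, y) \<in> r"
    "\<And>n x y. n > 0 \<Longrightarrow> (nsmul n x, nsmul n y) \<in> r \<Longrightarrow> (x, y) \<in> r"
  shows "isolated_order r"
  unfolding isolated_order_def using assms by metis

lemma isolated_order_add_left_iff:
  assumes "isolated_order r"
  shows "(c + x, c + y) \<in> r \<longleftrightarrow> (x, y) \<in> r"
  using isolated_order_add_right_iff[OF assms, of x c y] by (simp only: add.commute)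

lemma isolated_order_add_mono:
  assumes r: "isolated_order r" and "(x, y) \<in> r" "(u, v) \<in> r"
  shows "(x + u, y + v) \<in> r"
proof -
  have "(x + u, y + u) \<in> r" "(u + y, v + y) \<in> r"
    using assms isolated_order_add_right_iff[OF r] by blast+
  then show ?thesis
    using isolated_order_trans[OF r] by (metis add.commute)
qed

lemma isolated_order_add_trans:
  assumes r: "isolated_order r" and "(x + u, y + v) \<in> r" "(y + u', z + v') \<in> r"
  shows "(x + (u + u'), z + (v + v')) \<in> r"
proof -
  have "((x + u) + (y + u'), (y + v) + (z + v')) \<in> r"
    using isolated_order_add_mono[OF r assms(2,3)] .
  then have "((x + (u + u')) + y, (z + (v + v')) + y) \<in> r"
    by (simp only: ac_simps)
  then show ?thesis
    using isolated_order_add_right_iff[OF r] by blast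
qed

lemma isolated_order_nsmul_mono:
  assumes r: "isolated_order r" and "(x, y) \<in> r"
  shows "(nsmul n x, nsmul n y) \<in> r"
  by (induction n) (simp_all add: isolated_order_refl[OF r] isolated_order_add_mono[OF r _ assms(2)])

text \<open>In the quotient group, (x, y) \<in> adjoin_le r a b says 0 \<le> n (y - x) + k (a - b) in r
  for some n > 0 and k: the order generated by r and a \<le> b, made isolated.\<close>

definition adjoin_le :: "('g::cancel_comm_monoid_add \<times> 'g) set \<Rightarrow> 'g \<Rightarrow> 'g \<Rightarrow> ('g \<times> 'g) set" where
  "adjoin_le r a b = {(x, y). \<exists>n k. n > 0 \<and> (nsmul n x + nsmul k b, nsmul n y + nsmul k a) \<in> r}"

lemma adjoin_leI:
  "n > 0 \<Longrightarrow> (nsmul n x + nsmul k b, nsmul n y + nsmul k a) \<in> r \<Longrightarrow> (x, y) \<in> adjoin_le r a b"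
  unfolding adjoin_le_def by blast

lemma adjoin_le_scale:
  assumes r: "isolated_order r" and "(nsmul n x + nsmul k b, nsmul n y + nsmul k a) \<in> r"
  shows "(nsmul (m * n) x + nsmul (m * k) b, nsmul (m * n) y + nsmul (m * k) a) \<in> r"
  using isolated_order_nsmul_mono[OF assms, of m] by (simp add: nsmul_add_right nsmul_nsmul)

lemma adjoin_le_trans:
  assumes r: "isolated_order r" and "(x, y) \<in> adjoin_le r a b" "(y, z) \<in> adjoin_le r a b"
  shows "(x, z) \<in> adjoin_le r a b"
proof -
  obtain n k m l where n: "n > 0" "(nsmul n x + nsmul k b, nsmul n y + nsmul k a) \<in> r"
    and m: "m > 0" "(nsmul m y + nsmul l b, nsmul m z + nsmul l a) \<in> r"
    using assms(2,3) unfolding adjoin_le_def by blast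
  have "(nsmul (m * n) x + nsmul (m * k) b, nsmul (m * n) y + nsmul (m * k) a) \<in> r"
    by (rule adjoin_le_scale[OF r n(2)])
  moreover have "(nsmul (m * n) y + nsmul (n * l) b, nsmul (m * n) z + nsmul (n * l) a) \<in> r"
    using adjoin_le_scale[OF r m(2), of n] by (simp only: mult.commute[of n m])
  ultimately have "(nsmul (m * n) x + (nsmul (m * k) b + nsmul (n * l) b),
              nsmul (m * n) z + (nsmul (m * k) a + nsmul (n * l) a)) \<in> r"
    by (rule isolated_order_add_trans[OF r])
  then show ?thesis
    by (intro adjoin_leI[of "m * n" _ "m * k + n * l"]) (simp_all add: nsmul_add n(1) m(1))
qed

text \<open>Adding the two inequalities and cancelling leaves N b \<le> N a with N = m k + n l, which
  forces k = l = 0 because b \<le> a fails.\<close>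

lemma adjoin_le_antisym:
  assumes r: "isolated_order r" and ba: "(b, a) \<notin> r"
    and "(x, y) \<in> adjoin_le r a b" "(y, x) \<in> adjoin_le r a b"
  shows "x = y"
proof -
  obtain n k m l where n: "n > 0" "(nsmul n x + nsmul k b, nsmul n y + nsmul k a) \<in> r"
    and m: "m > 0" "(nsmul m y + nsmul l b, nsmul m x + nsmul l a) \<in> r"
    using assms(3,4) unfolding adjoin_le_def by blast
  have "(nsmul (m * n) x + nsmul (m * k) b, nsmul (m * n) y + nsmul (m * k) a) \<in> r"
    by (rule adjoin_le_scale[OF r n(2)])
  moreover have "(nsmul (m * n) y + nsmul (n * l) b, nsmul (m * n) x + nsmul (n * l) a) \<in> r"
    using adjoin_le_scale[OF r m(2), of n] by (simp only: mult.commute[of n m])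
  ultimately have "(nsmul (m * n) x + (nsmul (m * k) b + nsmul (n * l) b),
                    nsmul (m * n) x + (nsmul (m * k) a + nsmul (n * l) a)) \<in> r"
    by (rule isolated_order_add_trans[OF r])
  then have "(nsmul (m * k + n * l) b, nsmul (m * k + n * l) a) \<in> r"
    by (simp only: isolated_order_add_left_iff[OF r] nsmul_add)
  then have "m * k + n * l = 0"
    using isolated_order_nsmul_cancel[OF r] ba by blast
  then have "k = 0" "l = 0"
    using n(1) m(1) by simp_all
  then have "(x, y) \<in> r" "(y, x) \<in> r"
    using n m isolated_order_nsmul_cancel[OF r, of n x y] isolated_order_nsmul_cancel[OF r, of m y x]
    by simp_all
  then show ?thesis
    by (rule isolated_order_antisym[OF r])
qed

lemma isolated_order_adjoin_le:
  assumes r: "isolated_order r" and ba: "(b, a) \<notin> r"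
  shows "isolated_order (adjoin_le r a b)" "r \<subseteq> adjoin_le r a b" "(a, b) \<in> adjoin_le r a b"
proof -
  show sub: "r \<subseteq> adjoin_le r a b"
    using adjoin_leI[of 1 _ 0 b _ a r] by auto
  show "(a, b) \<in> adjoin_le r a b"
    using adjoin_leI[of 1 a 1 b b a r] isolated_order_refl[OF r, of "a + b"] by (simp add: add.commute)
  have refl: "(x, x) \<in> adjoin_le r a b" for x
    using sub isolated_order_refl[OF r] by blast
  have shift: "(x + c, y + c) \<in> adjoin_le r a b \<longleftrightarrow> (x, y) \<in> adjoin_le r a b" for x y c
  proof -
    have "nsmul n (x + c) + nsmul k b = (nsmul n x + nsmul k b) + nsmul n c" for n k x b
      by (simp add: nsmul_add_right ac_simps)
    then show ?thesis
      unfolding adjoin_le_def by (simp add: isolated_order_add_right_iff[OF r])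
  qed
  have cancel: "(x, y) \<in> adjoin_le r a b"
    if p: "p > 0" and pxy: "(nsmul p x, nsmul p y) \<in> adjoin_le r a b" for p x y
  proof -
    obtain n k where "n > 0" "(nsmul n (nsmul p x) + nsmul k b, nsmul n (nsmul p y) + nsmul k a) \<in> r"
      using pxy unfolding adjoin_le_def by blast
    then show ?thesis
      using p by (intro adjoin_leI[of "n * p"]) (simp_all add: nsmul_nsmul)
  qed
  show "isolated_order (adjoin_le r a b)"
    by (rule isolated_orderI[OF refl adjoin_le_trans[OF r] adjoin_le_antisym[OF r ba] shift cancel])
qed

lemma isolated_order_Id:
  assumes "torsion_free_quot TYPE('g::cancel_comm_monoid_add)"
  shows "isolated_order (Id :: ('g \<times> 'g) set)"
  by (rule isolated_orderI) (use assms in \<open>auto simp: torsion_free_quot_def nsmul_def\<close>)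

lemma isolated_order_Union_chain:
  assumes C: "C \<in> chains {r. isolated_order r}" "C \<noteq> {}"
  shows "isolated_order (\<Union>C)"
proof -
  have iso: "isolated_order X" if "X \<in> C" for X
    using C that unfolding chains_def by blast
  have both: "\<exists>X\<in>C. p \<in> X \<and> q \<in> X" if "p \<in> \<Union>C" "q \<in> \<Union>C" for p q
    using C that unfolding chains_def chain_subset_def by blast
  obtain X0 where "X0 \<in> C"
    using C(2) by blast
  show ?thesis
  proof (rule isolated_orderI)
    show "(x, x) \<in> \<Union>C" for x
      using \<open>X0 \<in> C\<close> isolated_order_refl[OF iso] by blast
    show "(x, z) \<in> \<Union>C" if "(x, y) \<in> \<Union>C" "(y, z) \<in> \<Union>C" for x y z
      using both[OF that] isolated_order_trans[OF iso] by blast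
    show "x = y" if "(x, y) \<in> \<Union>C" "(y, x) \<in> \<Union>C" for x y
      using both[OF that] isolated_order_antisym[OF iso] by blast
    show "(x + c, y + c) \<in> \<Union>C \<longleftrightarrow> (x, y) \<in> \<Union>C" for x y c
      using isolated_order_add_right_iff[OF iso] by blast
    show "(x, y) \<in> \<Union>C" if "n > 0" "(nsmul n x, nsmul n y) \<in> \<Union>C" for n x y
      using that isolated_order_nsmul_cancel[OF iso] by blast
  qed
qed

text \<open>An isolated order maximal under inclusion is total, since a pair of incomparable
  elements could be adjoined to it.\<close>

lemma total_isolated_order_exists:
  assumes "torsion_free_quot TYPE('g)"
  obtains r :: "('g::cancel_comm_monoid_add \<times> 'g) set" where "isolated_order r" "\<And>x y. (x, y) \<in> r \<or> (y, x) \<in> r"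
proof -
  let ?O = "{r :: ('g \<times> 'g) set. isolated_order r}"
  have "\<forall>C\<in>chains ?O. \<exists>U\<in>?O. \<forall>X\<in>C. X \<subseteq> U"
  proof
    fix C assume C: "C \<in> chains ?O"
    show "\<exists>U\<in>?O. \<forall>X\<in>C. X \<subseteq> U"
    proof (cases "C = {}")
      case True
      then show ?thesis
        using isolated_order_Id[OF assms] by blast
    next
      case False
      then have "isolated_order (\<Union>C)"
        by (rule isolated_order_Union_chain[OF C])
      then show ?thesis
        by blast
    qed
  qed
  from Zorn_Lemma2[OF this] obtain M where M: "isolated_order M"
    and max: "\<forall>X\<in>?O. M \<subseteq> X \<longrightarrow> X = M"
    by blast
  have "(x, y) \<in> M \<or> (y, x) \<in> M" for x y
  proof (rule ccontr)
    assume "\<not> ((x, y) \<in> M \<or> (y, x) \<in> M)"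
    then have yx: "(y, x) \<notin> M" and xy: "(x, y) \<notin> M"
      by blast+
    have "adjoin_le M x y = M"
      using max isolated_order_adjoin_le(1,2)[OF M yx] by blast
    then show False
      using isolated_order_adjoin_le(3)[OF M yx] xy by simp
  qed
  with M that show ?thesis
    by blast
qed

lemma finite_least_wrt_total_order:
  assumes r: "isolated_order r" and total: "\<And>x y. (x, y) \<in> r \<or> (y, x) \<in> r"
    and "finite A" "A \<noteq> {}"
  obtains m where "m \<in> A" "\<And>x. x \<in> A \<Longrightarrow> (m, x) \<in> r"
proof -
  have "\<exists>m\<in>A. \<forall>x\<in>A. (m, x) \<in> r"
    using assms(3,4)
  proof (induction A rule: finite_ne_induct)
    case (singleton x)
    then show ?case
      using isolated_order_refl[OF r] by blast
  next
    case (insert x F)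
    then obtain m where m: "m \<in> F" "\<forall>y\<in>F. (m, y) \<in> r"
      by blast
    show ?case
    proof (cases "(m, x) \<in> r")
      case True
      then show ?thesis
        using m by blast
    next
      case False
      then have "(x, m) \<in> r"
        using total by blast
      then show ?thesis
        using m isolated_order_trans[OF r] isolated_order_refl[OF r] by blast
    qed
  qed
  then show ?thesis
    using that by blast
qed

lemma isolated_order_add_eq_least:
  assumes r: "isolated_order r" and "(a0, a) \<in> r" "(b0, b) \<in> r" "a + b = a0 + b0"
  shows "a = a0 \<and> b = b0"
proof -
  have "(a0 + b0, a + b0) \<in> r"
    using assms(2) isolated_order_add_right_iff[OF r] by blast
  moreover have "(a + b0, a0 + b0) \<in> r"
    using assms(3,4) isolated_order_add_left_iff[OF r, of a b0 b] by simp
  ultimately have "a + b0 = a0 + b0"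
    by (rule isolated_order_antisym[OF r, rotated])
  then have "a = a0"
    by simp
  then show ?thesis
    using assms(4) by simp
qed

section \<open>Submodules and linear combinations\<close>

lemma
  assumes "is_subring A"
  shows subring_one: "1 \<in> A" and subring_zero: "0 \<in> A"
    and subring_add: "x \<in> A \<Longrightarrow> y \<in> A \<Longrightarrow> x + y \<in> A"
    and subring_mult: "x \<in> A \<Longrightarrow> y \<in> A \<Longrightarrow> x * y \<in> A"
    and subring_uminus: "x \<in> A \<Longrightarrow> - x \<in> A"
  using assms unfolding is_subring_def by auto

lemma subring_sum: "is_subring A \<Longrightarrow> (\<And>k. k \<in> K \<Longrightarrow> f k \<in> A) \<Longrightarrow> sum f K \<in> A"
  by (induction K rule: infinite_finite_induct) (auto simp: subring_zero subring_add)

lemma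
  assumes "is_submod A E"
  shows submod_zero: "0 \<in> E"
    and submod_add: "x \<in> E \<Longrightarrow> y \<in> E \<Longrightarrow> x + y \<in> E"
    and submod_smult: "r \<in> A \<Longrightarrow> x \<in> E \<Longrightarrow> r * x \<in> E"
  using assms unfolding is_submod_def by auto

lemma submod_diff:
  assumes A: "is_subring A" and E: "is_submod A E" and "x \<in> E" "y \<in> E"
  shows "x - y \<in> E"
proof -
  have "(- 1) * y \<in> E"
    using submod_smult[OF E subring_uminus[OF A subring_one[OF A]] \<open>y \<in> E\<close>] .
  then have "- y \<in> E"
    by simp
  then show ?thesis
    using submod_add[OF E \<open>x \<in> E\<close>] by (metis diff_conv_add_uminus)
qed

lemma submod_sum: "is_submod A E \<Longrightarrow> (\<And>k. k \<in> K \<Longrightarrow> f k \<in> E) \<Longrightarrow> sum f K \<in> E"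
  by (induction K rule: infinite_finite_induct) (auto simp: submod_zero submod_add)

lemma is_submod_subring: "is_subring A \<Longrightarrow> is_submod A A"
  unfolding is_submod_def is_subring_def by auto

lemma is_submod_colon:
  assumes A: "is_subring A"
  shows "is_submod A (colon A E)"
  unfolding is_submod_def colon_def
proof (intro conjI ballI CollectI)
  show "0 * y \<in> A" for y
    using subring_zero[OF A] by simp
  show "(x + y) * z \<in> A" if "x \<in> {x. \<forall>y\<in>E. x * y \<in> A}" "y \<in> {x. \<forall>y\<in>E. x * y \<in> A}" "z \<in> E"
    for x y z
    using that subring_add[OF A] by (simp add: distrib_right)
  show "(r * x) * z \<in> A" if "r \<in> A" "x \<in> {x. \<forall>y\<in>E. x * y \<in> A}" "z \<in> E" for r x z
    using that subring_mult[OF A] by (simp add: mult.assoc)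
qed

lemma lin_comb_zero: "0 \<in> lin_comb A S"
  unfolding lin_comb_def by (auto intro!: exI[of _ "{}"])

lemma lin_comb_gen: "is_subring A \<Longrightarrow> s \<in> S \<Longrightarrow> s \<in> lin_comb A S"
  unfolding lin_comb_def using subring_one[of A]
  by (auto intro!: exI[of _ "{s}"] exI[of _ "\<lambda>_. 1"])

lemma lin_combI:
  "finite T \<Longrightarrow> T \<subseteq> S \<Longrightarrow> (\<And>t. t \<in> T \<Longrightarrow> c t \<in> A) \<Longrightarrow> (\<Sum>t\<in>T. c t * t) \<in> lin_comb A S"
  unfolding lin_comb_def by blast

lemma lin_combE:
  assumes "x \<in> lin_comb A S"
  obtains T c where "finite T" "T \<subseteq> S" "\<And>t. t \<in> T \<Longrightarrow> c t \<in> A" "x = (\<Sum>t\<in>T. c t * t)"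
  using assms unfolding lin_comb_def by blast

lemma lin_comb_add:
  assumes A: "is_subring A" and x: "x \<in> lin_comb A S" and y: "y \<in> lin_comb A S"
  shows "x + y \<in> lin_comb A S"
proof -
  obtain T1 c1 where 1: "finite T1" "T1 \<subseteq> S" "\<And>t. t \<in> T1 \<Longrightarrow> c1 t \<in> A" "x = (\<Sum>t\<in>T1. c1 t * t)"
    using x by (elim lin_combE) blast
  obtain T2 c2 where 2: "finite T2" "T2 \<subseteq> S" "\<And>t. t \<in> T2 \<Longrightarrow> c2 t \<in> A" "y = (\<Sum>t\<in>T2. c2 t * t)"
    using y by (elim lin_combE) blast
  define c where "c t = (if t \<in> T1 then c1 t else 0) + (if t \<in> T2 then c2 t else 0)" for t
  have "(\<Sum>t\<in>T1 \<union> T2. c t * t)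
      = (\<Sum>t\<in>T1 \<union> T2. (if t \<in> T1 then c1 t * t else 0) + (if t \<in> T2 then c2 t * t else 0))"
    by (rule sum.cong) (auto simp: c_def distrib_right)
  also have "\<dots> = (\<Sum>t\<in>T1 \<union> T2. if t \<in> T1 then c1 t * t else 0)
      + (\<Sum>t\<in>T1 \<union> T2. if t \<in> T2 then c2 t * t else 0)"
    by (rule sum.distrib)
  also have "\<dots> = x + y"
    using 1 2 by (simp add: sum.inter_restrict[symmetric] Int_absorb1)
  finally have "x + y = (\<Sum>t\<in>T1 \<union> T2. c t * t)" ..
  moreover have "(\<Sum>t\<in>T1 \<union> T2. c t * t) \<in> lin_comb A S"
    by (rule lin_combI) (use 1 2 in \<open>auto simp: c_def subring_zero[OF A] subring_add[OF A]\<close>)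
  ultimately show ?thesis
    by simp
qed

lemma lin_comb_smult:
  assumes A: "is_subring A" and r: "r \<in> A" and x: "x \<in> lin_comb A S"
  shows "r * x \<in> lin_comb A S"
proof -
  obtain T c where 1: "finite T" "T \<subseteq> S" "\<And>t. t \<in> T \<Longrightarrow> c t \<in> A" "x = (\<Sum>t\<in>T. c t * t)"
    using x by (elim lin_combE) blast
  have "r * x = (\<Sum>t\<in>T. (r * c t) * t)"
    using 1 by (simp add: sum_distrib_left mult.assoc)
  moreover have "(\<Sum>t\<in>T. (r * c t) * t) \<in> lin_comb A S"
    by (rule lin_combI) (use 1 r subring_mult[OF A] in auto)
  ultimately show ?thesis
    by simp
qed

lemma is_submod_lin_comb: "is_subring A \<Longrightarrow> is_submod A (lin_comb A S)"
  unfolding is_submod_def using lin_comb_zero lin_comb_add lin_comb_smult by blast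

lemma lin_comb_least:
  assumes E: "is_submod A E" and S: "S \<subseteq> E"
  shows "lin_comb A S \<subseteq> E"
proof
  fix x assume "x \<in> lin_comb A S"
  then obtain T c where "T \<subseteq> S" "\<And>t. t \<in> T \<Longrightarrow> c t \<in> A" "x = (\<Sum>t\<in>T. c t * t)"
    by (elim lin_combE) blast
  then show "x \<in> E"
    using S submod_smult[OF E] by (auto intro!: submod_sum[OF E])
qed

lemma lin_comb_mono: "S \<subseteq> S' \<Longrightarrow> lin_comb A S \<subseteq> lin_comb A S'"
  unfolding lin_comb_def by blast

lemma lin_comb_sum: "is_subring A \<Longrightarrow> (\<And>k. k \<in> K \<Longrightarrow> f k \<in> lin_comb A S) \<Longrightarrow> sum f K \<in> lin_comb A S"
  by (rule submod_sum[OF is_submod_lin_comb])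

lemma lin_comb_subset: "is_subring A \<Longrightarrow> S \<subseteq> A \<Longrightarrow> lin_comb A S \<subseteq> A"
  using lin_comb_least is_submod_subring by blast

lemma lin_comb_of_submod: "is_subring A \<Longrightarrow> is_submod A E \<Longrightarrow> lin_comb A E = E"
  using lin_comb_least[of A E E] lin_comb_gen[of A _ E] by blast

lemma lin_comb_UN_lin_comb:
  assumes A: "is_subring A"
  shows "lin_comb A (\<Union>i\<in>K. lin_comb A (S i)) = lin_comb A (\<Union>i\<in>K. S i)"
proof
  show "lin_comb A (\<Union>i\<in>K. lin_comb A (S i)) \<subseteq> lin_comb A (\<Union>i\<in>K. S i)"
    by (rule lin_comb_least[OF is_submod_lin_comb[OF A]])
      (use lin_comb_mono[of _ "\<Union>i\<in>K. S i" A] in blast)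
  show "lin_comb A (\<Union>i\<in>K. S i) \<subseteq> lin_comb A (\<Union>i\<in>K. lin_comb A (S i))"
    by (rule lin_comb_mono) (use lin_comb_gen[OF A] in blast)
qed

lemma fin_gen_lin_comb: "finite S \<Longrightarrow> fin_gen A (lin_comb A S)"
  unfolding fin_gen_def by blast

lemma lin_comb_nonzero_gen:
  assumes "lin_comb A S \<noteq> {0}"
  obtains s where "s \<in> S" "s \<noteq> 0"
proof -
  have "lin_comb A S \<subseteq> {0}" if "S \<subseteq> {0}"
    by (rule lin_comb_least) (use that in \<open>auto simp: is_submod_def\<close>)
  then show ?thesis
    using assms lin_comb_zero that by blast
qed

lemma is_submod_pair_sums:
  assumes C: "is_submod A C"
  shows "is_submod A {z. \<exists>L. set L \<subseteq> G \<times> C \<and> z = (\<Sum>(g, c)\<leftarrow>L. g * c)}"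
  unfolding is_submod_def
proof (intro conjI ballI)
  show "0 \<in> {z. \<exists>L. set L \<subseteq> G \<times> C \<and> z = (\<Sum>(g, c)\<leftarrow>L. g * c)}"
    by (auto intro!: exI[of _ "[]"])
next
  fix x y assume "x \<in> {z. \<exists>L. set L \<subseteq> G \<times> C \<and> z = (\<Sum>(g, c)\<leftarrow>L. g * c)}"
    and "y \<in> {z. \<exists>L. set L \<subseteq> G \<times> C \<and> z = (\<Sum>(g, c)\<leftarrow>L. g * c)}"
  then obtain L1 L2 where "set L1 \<subseteq> G \<times> C" "x = (\<Sum>(g, c)\<leftarrow>L1. g * c)"
    "set L2 \<subseteq> G \<times> C" "y = (\<Sum>(g, c)\<leftarrow>L2. g * c)"
    by blast
  then show "x + y \<in> {z. \<exists>L. set L \<subseteq> G \<times> C \<and> z = (\<Sum>(g, c)\<leftarrow>L. g * c)}"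
    by (intro CollectI exI[of _ "L1 @ L2"]) auto
next
  fix r x assume r: "r \<in> A" and "x \<in> {z. \<exists>L. set L \<subseteq> G \<times> C \<and> z = (\<Sum>(g, c)\<leftarrow>L. g * c)}"
  then obtain L where L: "set L \<subseteq> G \<times> C" "x = (\<Sum>(g, c)\<leftarrow>L. g * c)"
    by blast
  have "set (map (\<lambda>(g, c). (g, r * c)) L) \<subseteq> G \<times> C"
    using L(1) submod_smult[OF C r] by auto
  moreover have "r * x = (\<Sum>(g, c)\<leftarrow>map (\<lambda>(g, c). (g, r * c)) L. g * c)"
    unfolding L(2) by (induction L) (auto simp: algebra_simps)
  ultimately show "r * x \<in> {z. \<exists>L. set L \<subseteq> G \<times> C \<and> z = (\<Sum>(g, c)\<leftarrow>L. g * c)}"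
    by blast
qed

lemma lin_comb_mult_pair_sum:
  assumes C: "is_submod A C" and x: "x \<in> lin_comb A G" and y: "y \<in> C"
  obtains L where "set L \<subseteq> G \<times> C" "x * y = (\<Sum>(g, c)\<leftarrow>L. g * c)"
proof -
  obtain T c where T: "finite T" "T \<subseteq> G" "\<And>t. t \<in> T \<Longrightarrow> c t \<in> A" "x = (\<Sum>t\<in>T. c t * t)"
    using x by (elim lin_combE) blast
  obtain ts where ts: "set ts = T" "distinct ts"
    using finite_distinct_list[OF T(1)] by blast
  have "set (map (\<lambda>t. (t, c t * y)) ts) \<subseteq> G \<times> C"
    using T ts submod_smult[OF C _ y] by auto
  moreover have "x * y = (\<Sum>t\<in>T. t * (c t * y))"
    unfolding T(4) sum_distrib_right by (rule sum.cong) (simp_all add: ac_simps)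
  then have "x * y = (\<Sum>(g, c)\<leftarrow>map (\<lambda>t. (t, c t * y)) ts. g * c)"
    using sum.distinct_set_conv_list[OF ts(2)] ts(1) by (simp add: comp_def)
  ultimately show ?thesis
    using that by blast
qed

lemma submod_mult_lin_comb_sum_list:
  assumes C: "is_submod A C" and z: "z \<in> submod_mult A (lin_comb A G) C"
  obtains L where "set L \<subseteq> G \<times> C" "z = (\<Sum>(g, c)\<leftarrow>L. g * c)"
proof -
  have "{x * y | x y. x \<in> lin_comb A G \<and> y \<in> C} \<subseteq> {z. \<exists>L. set L \<subseteq> G \<times> C \<and> z = (\<Sum>(g, c)\<leftarrow>L. g * c)}"
    using lin_comb_mult_pair_sum[OF C] by blast
  then have "submod_mult A (lin_comb A G) C \<subseteq> {z. \<exists>L. set L \<subseteq> G \<times> C \<and> z = (\<Sum>(g, c)\<leftarrow>L. g * c)}"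
    unfolding submod_mult_def by (rule lin_comb_least[OF is_submod_pair_sums[OF C]])
  then show ?thesis
    using z that by blast
qed

lemma Fract_add_same_denom: "(q::'a::idom) \<noteq> 0 \<Longrightarrow> Fract p q + Fract p' q = Fract (p + p') q"
  by (simp add: eq_fract algebra_simps)

lemma Fract_sum: "(q::'a::idom) \<noteq> 0 \<Longrightarrow> Fract (sum g K) q = (\<Sum>k\<in>K. Fract (g k) q)"
  by (induction K rule: infinite_finite_induct) (auto simp: Fract_add_same_denom[symmetric] fract_collapse)

lemma Fract_self: "(q::'a::idom) \<noteq> 0 \<Longrightarrow> Fract q q = 1"
  by (simp add: eq_fract One_fract_def)

lemma Fract_1_eq_iff: "Fract (p::'a::idom) 1 = Fract p' 1 \<longleftrightarrow> p = p'"
  by (simp add: eq_fract)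

lemma poly_over_coeff: "f \<in> poly_over R \<Longrightarrow> coeff f i \<in> R"
  unfolding poly_over_def by auto

lemma poly_over_mult:
  assumes R: "is_subring R" and f: "f \<in> poly_over R" and g: "g \<in> poly_over R"
  shows "f * g \<in> poly_over R"
  using f g unfolding poly_over_def
  by (auto simp: coeff_mult intro!: subring_sum[OF R] subring_mult[OF R])

lemma poly_over_add: "is_subring R \<Longrightarrow> f \<in> poly_over R \<Longrightarrow> g \<in> poly_over R \<Longrightarrow> f + g \<in> poly_over R"
  unfolding poly_over_def by (simp add: subring_add)

lemma poly_over_uminus: "is_subring R \<Longrightarrow> f \<in> poly_over R \<Longrightarrow> - f \<in> poly_over R"
  unfolding poly_over_def by (simp add: subring_uminus)

lemma poly_over_const: "is_subring R \<Longrightarrow> a \<in> R \<Longrightarrow> [:a:] \<in> poly_over R"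
  unfolding poly_over_def by (auto simp: coeff_pCons split: nat.splits intro: subring_zero)

lemma poly_over_zero: "is_subring R \<Longrightarrow> 0 \<in> poly_over R"
  unfolding poly_over_def by (simp add: subring_zero)

lemma poly_over_one: "is_subring R \<Longrightarrow> 1 \<in> poly_over R"
  using poly_over_const[of R 1] subring_one[of R] by (simp add: one_pCons)

lemma poly_over_monom: "is_subring R \<Longrightarrow> a \<in> R \<Longrightarrow> monom a n \<in> poly_over R"
  unfolding poly_over_def by (auto intro: subring_zero)

text \<open>Gauss' lemma for a prime ideal P: compare the coefficients of f g of index
  i0 + j0, where i0, j0 are the least indices of coefficients of f, g outside P.\<close>

lemma prime_coeff_mult:
  assumes R: "is_subring R" and P: "is_submod R P"
    and prime: "\<And>a b. a \<in> R \<Longrightarrow> b \<in> R \<Longrightarrow> a * b \<in> P \<Longrightarrow> a \<in> P \<or> b \<in> P"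
    and f: "f \<in> poly_over R" and g: "g \<in> poly_over R"
    and "coeff f i \<notin> P" and "coeff g j \<notin> P"
  obtains n where "coeff (f * g) n \<notin> P"
proof -
  define i0 where "i0 = (LEAST i. coeff f i \<notin> P)"
  define j0 where "j0 = (LEAST j. coeff g j \<notin> P)"
  have i0: "coeff f i0 \<notin> P" "\<And>i. i < i0 \<Longrightarrow> coeff f i \<in> P"
    unfolding i0_def using LeastI[of "\<lambda>i. coeff f i \<notin> P", OF \<open>coeff f i \<notin> P\<close>] not_less_Least
    by blast+
  have j0: "coeff g j0 \<notin> P" "\<And>j. j < j0 \<Longrightarrow> coeff g j \<in> P"
    unfolding j0_def using LeastI[of "\<lambda>j. coeff g j \<notin> P", OF \<open>coeff g j \<notin> P\<close>] not_less_Least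
    by blast+
  let ?t = "\<lambda>i. coeff f i * coeff g (i0 + j0 - i)"
  have rest: "(\<Sum>i\<in>{..i0 + j0} - {i0}. ?t i) \<in> P"
  proof (rule submod_sum[OF P])
    fix i assume i: "i \<in> {..i0 + j0} - {i0}"
    show "?t i \<in> P"
    proof (cases "i < i0")
      case True
      then show ?thesis
        using submod_smult[OF P poly_over_coeff[OF g] i0(2)] by (simp add: mult.commute)
    next
      case False
      then have "i0 + j0 - i < j0"
        using i by auto
      then show ?thesis
        using submod_smult[OF P poly_over_coeff[OF f] j0(2)] by blast
    qed
  qed
  have "coeff (f * g) (i0 + j0) = ?t i0 + (\<Sum>i\<in>{..i0 + j0} - {i0}. ?t i)"
    unfolding coeff_mult by (rule sum.remove) auto
  then have "?t i0 = coeff (f * g) (i0 + j0) - (\<Sum>i\<in>{..i0 + j0} - {i0}. ?t i)"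
    by simp
  moreover have "?t i0 \<notin> P"
    using prime[OF poly_over_coeff[OF f] poly_over_coeff[OF g]] i0(1) j0(1) by auto
  ultimately have "coeff (f * g) (i0 + j0) \<notin> P"
    using submod_diff[OF R P _ rest] by auto
  then show ?thesis
    by (rule that)
qed

lemma is_submod_mult_preimage:
  assumes "is_submod A E"
  shows "is_submod A {y. c * y \<in> E}"
  using assms unfolding is_submod_def by (simp add: distrib_left mult.left_commute)

lemma lin_comb_mult_subset:
  assumes A: "is_subring A" and E: "is_submod A E" and ST: "\<And>s t. s \<in> S \<Longrightarrow> t \<in> T \<Longrightarrow> s * t \<in> E"
    and x: "x \<in> lin_comb A S" and y: "y \<in> lin_comb A T"
  shows "x * y \<in> E"
proof -
  have "lin_comb A T \<subseteq> {y. s * y \<in> E}" if "s \<in> S" for s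
    by (rule lin_comb_least[OF is_submod_mult_preimage[OF E]]) (use ST that in blast)
  then have "S \<subseteq> {x. y * x \<in> E}"
    using y by (auto simp: mult.commute)
  then have "lin_comb A S \<subseteq> {x. y * x \<in> E}"
    by (rule lin_comb_least[OF is_submod_mult_preimage[OF E]])
  then show ?thesis
    using x by (auto simp: mult.commute)
qed

lemma lin_comb_insert_mult_subset:
  assumes A: "is_subring A" and P: "is_submod A P" "P \<subseteq> A" and "a \<in> A" "b \<in> A" "a * b \<in> P"
    and x: "x \<in> lin_comb A (insert a P)" and y: "y \<in> lin_comb A (insert b P)"
  shows "x * y \<in> P"
proof (rule lin_comb_mult_subset[OF A P(1) _ x y])
  fix u v assume u: "u \<in> insert a P" and v: "v \<in> insert b P"
  show "u * v \<in> P"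
  proof (cases "u = a")
    case True
    then show ?thesis
      using v assms(6) submod_smult[OF P(1) \<open>a \<in> A\<close>, of v] by auto
  next
    case False
    then have "u \<in> P"
      using u by blast
    moreover have "v \<in> A"
      using v P(2) \<open>b \<in> A\<close> by blast
    ultimately show ?thesis
      using submod_smult[OF P(1), of v u] by (simp add: mult.commute)
  qed
qed

lemma finite_subset_chain_member:
  assumes chain: "\<And>X Y. X \<in> C \<Longrightarrow> Y \<in> C \<Longrightarrow> X \<subseteq> Y \<or> Y \<subseteq> X" and "C \<noteq> {}"
    and "finite S" "S \<subseteq> \<Union>C"
  obtains J where "J \<in> C" "S \<subseteq> J"
proof -
  have "\<exists>J\<in>C. S \<subseteq> J"
    using assms(3,4)
  proof (induction S rule: finite_induct)
    case empty
    then show ?case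
      using \<open>C \<noteq> {}\<close> by blast
  next
    case (insert x F)
    then obtain J1 J2 where "J1 \<in> C" "F \<subseteq> J1" "J2 \<in> C" "x \<in> J2"
      by blast
    then show ?case
      using chain[of J1 J2] by blast
  qed
  then show ?thesis
    using that by blast
qed

lemma is_ideal_Union_chain:
  assumes chain: "\<And>X Y. X \<in> C \<Longrightarrow> Y \<in> C \<Longrightarrow> X \<subseteq> Y \<or> Y \<subseteq> X" and "C \<noteq> {}"
    and ideal: "\<And>J. J \<in> C \<Longrightarrow> is_ideal A J"
  shows "is_ideal A (\<Union>C)"
  unfolding is_ideal_def is_submod_def
proof (intro conjI ballI)
  obtain J0 where "J0 \<in> C"
    using \<open>C \<noteq> {}\<close> by blast
  then show "0 \<in> \<Union>C"
    using ideal[of J0] unfolding is_ideal_def is_submod_def by blast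
  show "x + y \<in> \<Union>C" if "x \<in> \<Union>C" "y \<in> \<Union>C" for x y
  proof -
    have xy: "finite {x, y}" "{x, y} \<subseteq> \<Union>C"
      using that by auto
    obtain K where "K \<in> C" "{x, y} \<subseteq> K"
      by (rule finite_subset_chain_member[OF chain \<open>C \<noteq> {}\<close> xy]) blast
    then show ?thesis
      using submod_add[of A K x y] ideal unfolding is_ideal_def by blast
  qed
  show "r * x \<in> \<Union>C" if "r \<in> A" "x \<in> \<Union>C" for r x
    using that submod_smult[of A _ r x] ideal unfolding is_ideal_def by blast
  show "\<Union>C \<subseteq> A"
    using ideal unfolding is_ideal_def by blast
qed

lemma nz_submod_scal:
  fixes x :: "'k::field"
  assumes x: "x \<noteq> 0" and F: "nz_submod A F"
  shows "nz_submod A (scal x F)"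
proof -
  have "is_submod A (scal x F)"
    using F unfolding nz_submod_def is_submod_def scal_def
    by (auto simp: distrib_left[symmetric] mult.left_commute image_iff)
  moreover obtain c where "c \<in> F" "c \<noteq> 0"
    using F unfolding nz_submod_def is_submod_def by blast
  then have "x * c \<in> scal x F" "x * c \<noteq> 0"
    using x unfolding scal_def by auto
  ultimately show ?thesis
    unfolding nz_submod_def by blast
qed

lemma invertible_idealI:
  assumes A: "is_subring A" and J: "nz_frac_ideal A J" and one: "1 \<in> submod_mult A J (colon A J)"
  shows "invertible_ideal A J"
proof -
  have "submod_mult A J (colon A J) \<subseteq> A"
    unfolding submod_mult_def by (rule lin_comb_subset[OF A]) (auto simp: colon_def mult.commute)
  moreover have "A \<subseteq> submod_mult A J (colon A J)"
    using lin_comb_smult[OF A _ one[unfolded submod_mult_def]] unfolding submod_mult_def by force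
  ultimately show ?thesis
    unfolding invertible_ideal_def using J by blast
qed

lemma submod_mult_lin_comb_sum:
  assumes C: "is_submod A C" and z: "z \<in> submod_mult A (lin_comb A G) C"
  obtains n :: nat and g c where "\<forall>k<n. g k \<in> G" "\<forall>k<n. c k \<in> C" "z = (\<Sum>k<n. g k * c k)"
proof -
  obtain L where L: "set L \<subseteq> G \<times> C" "z = (\<Sum>(g, c)\<leftarrow>L. g * c)"
    by (rule submod_mult_lin_comb_sum_list[OF C z])
  have "z = (\<Sum>k<length L. fst (L ! k) * snd (L ! k))"
    unfolding L(2) sum_list_sum_nth by (simp add: atLeast0LessThan case_prod_beta)
  moreover have "fst (L ! k) \<in> G" "snd (L ! k) \<in> C" if "k < length L" for k
    using L(1) nth_mem[OF that] by auto
  ultimately show ?thesis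
    using that[of "length L" "\<lambda>k. fst (L ! k)" "\<lambda>k. snd (L ! k)"] by blast
qed

lemma coeff_in_colon_if_smult:
  assumes R: "is_subring R" and I: "I = lin_comb R G" and h: "\<And>b. b \<in> G \<Longrightarrow> smult b h \<in> poly_over R"
  shows "coeff h i \<in> colon R I"
proof -
  have "G \<subseteq> {v. coeff h i * v \<in> R}"
    using h poly_over_coeff[of "smult _ h" R i] by (auto simp: mult.commute)
  then have "I \<subseteq> {v. coeff h i * v \<in> R}"
    unfolding I by (rule lin_comb_least[OF is_submod_mult_preimage[OF is_submod_subring[OF R]]])
  then show ?thesis
    unfolding colon_def by blast
qed

section \<open>Homogeneous components\<close>

locale graded_dom =
  fixes R :: "'k::field set" and Rg :: "'g::cancel_comm_monoid_add \<Rightarrow> 'k set"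
  assumes graded: "graded_domain R Rg"
begin

lemma
  shows R_subring: "is_subring R"
    and Rg_subset_R: "Rg \<alpha> \<subseteq> R"
    and Rg_zero: "0 \<in> Rg \<alpha>"
    and Rg_add: "x \<in> Rg \<alpha> \<Longrightarrow> y \<in> Rg \<alpha> \<Longrightarrow> x + y \<in> Rg \<alpha>"
    and Rg_mult: "x \<in> Rg \<alpha> \<Longrightarrow> y \<in> Rg \<beta> \<Longrightarrow> x * y \<in> Rg (\<alpha> + \<beta>)"
    and ex_hom_decomp: "x \<in> R \<Longrightarrow> \<exists>f. hom_decomp Rg f x"
    and hom_decomp_unique: "hom_decomp Rg f x \<Longrightarrow> hom_decomp Rg g x \<Longrightarrow> f = g"
    and torsion_free: "torsion_free_quot TYPE('g)"
  using graded unfolding graded_domain_def by blast+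

lemma R_zero: "0 \<in> R" and R_one: "1 \<in> R" and R_mult: "x \<in> R \<Longrightarrow> y \<in> R \<Longrightarrow> x * y \<in> R"
  using subring_zero subring_one subring_mult R_subring by blast+

lemma Rg_sum: "(\<And>k. k \<in> K \<Longrightarrow> f k \<in> Rg \<alpha>) \<Longrightarrow> sum f K \<in> Rg \<alpha>"
  by (induction K rule: infinite_finite_induct) (auto simp: Rg_zero Rg_add)

definition hcomp :: "'k \<Rightarrow> 'g \<Rightarrow> 'k" where
  "hcomp x = (SOME f. hom_decomp Rg f x)"

lemma hom_decomp_hcomp: "x \<in> R \<Longrightarrow> hom_decomp Rg (hcomp x) x"
  unfolding hcomp_def using ex_hom_decomp someI_ex by metis

lemma hcomp_unique: "hom_decomp Rg f x \<Longrightarrow> hcomp x = f"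
  unfolding hcomp_def using hom_decomp_unique someI[of "\<lambda>f. hom_decomp Rg f x" f] by metis

lemma hcomp_in_Rg: "x \<in> R \<Longrightarrow> hcomp x \<alpha> \<in> Rg \<alpha>"
  using hom_decomp_hcomp unfolding hom_decomp_def by auto

lemma hcomp_in_R: "x \<in> R \<Longrightarrow> hcomp x \<alpha> \<in> R"
  using hcomp_in_Rg Rg_subset_R by auto

lemma finite_hcomp_support: "x \<in> R \<Longrightarrow> finite {\<alpha>. hcomp x \<alpha> \<noteq> 0}"
  using hom_decomp_hcomp unfolding hom_decomp_def fin_supp_def by auto

lemma sum_hcomp_superset:
  assumes "x \<in> R" "finite S" "{\<alpha>. hcomp x \<alpha> \<noteq> 0} \<subseteq> S"
  shows "x = (\<Sum>\<alpha>\<in>S. hcomp x \<alpha>)"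
proof -
  have "x = (\<Sum>\<alpha>\<in>{\<alpha>. hcomp x \<alpha> \<noteq> 0}. hcomp x \<alpha>)"
    using hom_decomp_hcomp[OF assms(1)] unfolding hom_decomp_def by auto
  also have "\<dots> = (\<Sum>\<alpha>\<in>S. hcomp x \<alpha>)" by (rule sum.mono_neutral_left) (use assms in auto)
  finally show ?thesis .
qed

lemma sum_hcomp: "x \<in> R \<Longrightarrow> x = (\<Sum>\<alpha>\<in>{\<alpha>. hcomp x \<alpha> \<noteq> 0}. hcomp x \<alpha>)"
  using sum_hcomp_superset finite_hcomp_support by blast

lemma hcomp_eqI:
  assumes "finite S" "\<And>\<alpha>. f \<alpha> \<in> Rg \<alpha>" "\<And>\<alpha>. \<alpha> \<notin> S \<Longrightarrow> f \<alpha> = 0" "x = (\<Sum>\<alpha>\<in>S. f \<alpha>)"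
  shows "hcomp x = f"
proof (rule hcomp_unique)
  have supp: "{\<alpha>. f \<alpha> \<noteq> 0} \<subseteq> S" using assms(3) by auto
  have "x = (\<Sum>\<alpha>\<in>{\<alpha>. f \<alpha> \<noteq> 0}. f \<alpha>)"
    unfolding assms(4) by (rule sum.mono_neutral_right) (use assms supp in auto)
  then show "hom_decomp Rg f x"
    unfolding hom_decomp_def fin_supp_def using assms(1,2) supp finite_subset by blast
qed

lemma hcomp_add:
  assumes x: "x \<in> R" and y: "y \<in> R"
  shows "hcomp (x + y) = (\<lambda>\<alpha>. hcomp x \<alpha> + hcomp y \<alpha>)"
proof (rule hcomp_eqI)
  let ?S = "{\<alpha>. hcomp x \<alpha> \<noteq> 0} \<union> {\<alpha>. hcomp y \<alpha> \<noteq> 0}"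
  show "finite ?S"
    using finite_hcomp_support x y by auto
  show "hcomp x \<alpha> + hcomp y \<alpha> \<in> Rg \<alpha>" for \<alpha>
    using hcomp_in_Rg x y Rg_add by auto
  show "hcomp x \<alpha> + hcomp y \<alpha> = 0" if "\<alpha> \<notin> ?S" for \<alpha>
    using that by auto
  show "x + y = (\<Sum>\<alpha>\<in>?S. hcomp x \<alpha> + hcomp y \<alpha>)"
    using sum_hcomp_superset[OF x, of ?S] sum_hcomp_superset[OF y, of ?S] finite_hcomp_support x y
    by (simp add: sum.distrib)
qed

lemma hcomp_zero: "hcomp 0 = (\<lambda>\<alpha>. 0)"
  by (rule hcomp_eqI[of "{}"]) (auto simp: Rg_zero)

lemma hcomp_sum: "(\<And>k. k \<in> K \<Longrightarrow> f k \<in> R) \<Longrightarrow> hcomp (sum f K) \<alpha> = (\<Sum>k\<in>K. hcomp (f k) \<alpha>)"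
proof (induction K rule: infinite_finite_induct)
  case (insert x F)
  then have "sum f F \<in> R"
    by (intro subring_sum[OF R_subring]) auto
  then show ?case
    using insert hcomp_add by simp
qed (simp_all add: hcomp_zero)

lemma hcomp_hom: "x \<in> Rg \<alpha> \<Longrightarrow> hcomp x = (\<lambda>\<beta>. if \<beta> = \<alpha> then x else 0)"
  by (rule hcomp_eqI[of "{\<alpha>}"]) (auto simp: Rg_zero)

lemma hcomp_mult:
  assumes x: "x \<in> R" and y: "y \<in> R" and S: "finite S" "{\<alpha>. hcomp x \<alpha> \<noteq> 0} \<subseteq> S"
    and T: "finite T" "{\<alpha>. hcomp y \<alpha> \<noteq> 0} \<subseteq> T"
  shows "hcomp (x * y) \<delta> = (\<Sum>p\<in>{p\<in>S \<times> T. fst p + snd p = \<delta>}. hcomp x (fst p) * hcomp y (snd p))"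
proof -
  define h where "h \<delta> = (\<Sum>p\<in>{p\<in>S \<times> T. fst p + snd p = \<delta>}. hcomp x (fst p) * hcomp y (snd p))" for \<delta>
  let ?D = "(\<lambda>p. fst p + snd p) ` (S \<times> T)"
  have "hcomp (x * y) = h"
  proof (rule hcomp_eqI)
    show "finite ?D"
      using S T by auto
    show "h \<delta> \<in> Rg \<delta>" for \<delta>
      unfolding h_def by (rule Rg_sum) (auto intro: Rg_mult hcomp_in_Rg x y)
    show "h \<delta> = 0" if "\<delta> \<notin> ?D" for \<delta>
    proof -
      have "{p\<in>S \<times> T. fst p + snd p = \<delta>} = {}"
        using that by force
      then show ?thesis
        unfolding h_def by (simp only: sum.empty)
    qed
    have "x * y = (\<Sum>a\<in>S. hcomp x a) * (\<Sum>b\<in>T. hcomp y b)"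
      using sum_hcomp_superset x y S T by metis
    also have "\<dots> = (\<Sum>p\<in>S \<times> T. hcomp x (fst p) * hcomp y (snd p))"
      by (simp add: sum_product sum.cartesian_product case_prod_beta)
    also have "\<dots> = (\<Sum>\<delta>\<in>?D. h \<delta>)"
      unfolding h_def
      using sum.image_gen[of "S \<times> T" "\<lambda>p. hcomp x (fst p) * hcomp y (snd p)" "\<lambda>p. fst p + snd p"] S T
      by simp
    finally show "x * y = (\<Sum>\<delta>\<in>?D. h \<delta>)" .
  qed
  then show ?thesis
    unfolding h_def by simp
qed

lemma hom_decomp_weaken: "hom_decomp (\<lambda>\<alpha>. I \<inter> Rg \<alpha>) f x \<Longrightarrow> hom_decomp Rg f x"
  unfolding hom_decomp_def by auto

definition hom_closed :: "'k set \<Rightarrow> bool" where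
  "hom_closed E \<longleftrightarrow> (\<forall>x\<in>E. \<forall>\<alpha>. hcomp x \<alpha> \<in> E)"

lemma hom_ideal_hom_closed:
  assumes "hom_ideal R Rg I"
  shows "hom_closed I"
  unfolding hom_closed_def
proof (intro ballI allI)
  fix x \<alpha> assume "x \<in> I"
  then obtain f where f: "hom_decomp (\<lambda>\<alpha>. I \<inter> Rg \<alpha>) f x"
    using assms unfolding hom_ideal_def by blast
  then have "hcomp x = f"
    using hcomp_unique hom_decomp_weaken by blast
  then show "hcomp x \<alpha> \<in> I"
    using f unfolding hom_decomp_def by auto
qed

lemma mem_submod_if_hcomps: "x \<in> R \<Longrightarrow> is_submod R P \<Longrightarrow> (\<And>\<alpha>. hcomp x \<alpha> \<in> P) \<Longrightarrow> x \<in> P"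
  using sum_hcomp submod_sum by metis

lemma hom_closed_lin_comb:
  assumes S: "S \<subseteq> R" and h: "\<And>s \<alpha>. s \<in> S \<Longrightarrow> hcomp s \<alpha> \<in> lin_comb R S"
  shows "hom_closed (lin_comb R S)"
proof -
  let ?L = "lin_comb R S"
  let ?E = "{x \<in> ?L. \<forall>\<alpha>. hcomp x \<alpha> \<in> ?L}"
  have LR: "?L \<subseteq> R"
    by (rule lin_comb_subset[OF R_subring S])
  have "is_submod R ?E"
    unfolding is_submod_def
  proof (intro conjI ballI)
    show "0 \<in> ?E"
      using lin_comb_zero hcomp_zero by auto
  next
    fix x y assume x: "x \<in> ?E" and y: "y \<in> ?E"
    then have "x \<in> R" "y \<in> R"
      using LR by auto
    then show "x + y \<in> ?E"
      using hcomp_add lin_comb_add[OF R_subring] x y by auto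
  next
    fix r x assume r: "r \<in> R" and x: "x \<in> ?E"
    then have xR: "x \<in> R"
      using LR by auto
    have "hcomp (r * x) \<alpha> \<in> ?L" for \<alpha>
      unfolding hcomp_mult[OF r xR finite_hcomp_support[OF r] order_refl
          finite_hcomp_support[OF xR] order_refl]
      by (rule lin_comb_sum[OF R_subring]) (use x hcomp_in_R[OF r] lin_comb_smult[OF R_subring] in auto)
    then show "r * x \<in> ?E"
      using x r lin_comb_smult[OF R_subring] by auto
  qed
  moreover have "S \<subseteq> ?E"
    using lin_comb_gen[OF R_subring] h by auto
  ultimately have "?L \<subseteq> ?E"
    by (rule lin_comb_least)
  then show ?thesis
    unfolding hom_closed_def by auto
qed

lemma hom_closed_lin_comb_hom:
  assumes "S \<subseteq> (\<Union>\<alpha>. Rg \<alpha>)"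
  shows "hom_closed (lin_comb R S)"
proof (rule hom_closed_lin_comb)
  show "S \<subseteq> R"
    using assms Rg_subset_R by auto
  fix s \<alpha> assume "s \<in> S"
  then obtain \<beta> where "s \<in> Rg \<beta>"
    using assms by auto
  then show "hcomp s \<alpha> \<in> lin_comb R S"
    using hcomp_hom lin_comb_gen[OF R_subring] lin_comb_zero \<open>s \<in> S\<close> by auto
qed

text \<open>Any other pair of degrees with sum a0 + b0 has one degree strictly below a0 or b0,
  so the corresponding product of components has a factor in P.\<close>

lemma hcomp_mult_lowest:
  assumes P: "is_submod R P" and r: "isolated_order r" and a: "a \<in> R" and b: "b \<in> R"
    and a0: "\<And>x. hcomp a x \<notin> P \<Longrightarrow> (a0, x) \<in> r" and b0: "\<And>y. hcomp b y \<notin> P \<Longrightarrow> (b0, y) \<in> r"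
    and nz: "hcomp a a0 \<noteq> 0" "hcomp b b0 \<noteq> 0"
  shows "hcomp (a * b) (a0 + b0) - hcomp a a0 * hcomp b b0 \<in> P"
proof -
  let ?Q = "{p \<in> {\<alpha>. hcomp a \<alpha> \<noteq> 0} \<times> {\<alpha>. hcomp b \<alpha> \<noteq> 0}. fst p + snd p = a0 + b0}"
  let ?t = "\<lambda>p. hcomp a (fst p) * hcomp b (snd p)"
  have "finite ?Q"
    using finite_hcomp_support[OF a] finite_hcomp_support[OF b] by auto
  moreover have "(a0, b0) \<in> ?Q"
    using nz by auto
  ultimately have "hcomp (a * b) (a0 + b0) = ?t (a0, b0) + (\<Sum>p\<in>?Q - {(a0, b0)}. ?t p)"
    unfolding hcomp_mult[OF a b finite_hcomp_support[OF a] order_refl finite_hcomp_support[OF b] order_refl]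
    by (rule sum.remove)
  moreover have "(\<Sum>p\<in>?Q - {(a0, b0)}. ?t p) \<in> P"
  proof (rule submod_sum[OF P])
    fix p assume p: "p \<in> ?Q - {(a0, b0)}"
    obtain x y where xy: "p = (x, y)"
      by (cases p)
    have "hcomp a x \<in> P \<or> hcomp b y \<in> P"
    proof (rule ccontr)
      assume "\<not> (hcomp a x \<in> P \<or> hcomp b y \<in> P)"
      then have "x = a0 \<and> y = b0"
        using isolated_order_add_eq_least[OF r a0 b0] p xy by auto
      then show False
        using p xy by auto
    qed
    then show "?t p \<in> P"
    proof
      assume "hcomp a x \<in> P"
      then show ?thesis
        using xy submod_smult[OF P hcomp_in_R[OF b, of y]] by (simp add: mult.commute)
    next
      assume "hcomp b y \<in> P"
      then show ?thesis
        using xy submod_smult[OF P hcomp_in_R[OF a, of x]] by simp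
    qed
  qed
  ultimately show ?thesis
    by simp
qed

lemma hcomp_least_outside:
  assumes P: "is_submod R P" and r: "isolated_order r" and total: "\<And>x y. (x, y) \<in> r \<or> (y, x) \<in> r"
    and a: "a \<in> R" "a \<notin> P"
  obtains a0 where "hcomp a a0 \<notin> P" "\<And>x. hcomp a x \<notin> P \<Longrightarrow> (a0, x) \<in> r"
proof -
  have "finite {\<alpha>. hcomp a \<alpha> \<notin> P}"
    by (rule finite_subset[OF _ finite_hcomp_support[OF a(1)]]) (use submod_zero[OF P] in auto)
  moreover have "{\<alpha>. hcomp a \<alpha> \<notin> P} \<noteq> {}"
    using mem_submod_if_hcomps[OF a(1) P] a(2) by auto
  ultimately obtain a0 where "a0 \<in> {\<alpha>. hcomp a \<alpha> \<notin> P}" "\<And>x. x \<in> {\<alpha>. hcomp a \<alpha> \<notin> P} \<Longrightarrow> (a0, x) \<in> r"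
    by (rule finite_least_wrt_total_order[OF r total]) blast
  then show ?thesis
    using that by simp
qed

lemma hom_prime_imp_prime:
  assumes P: "is_ideal R P" "hom_closed P"
    and hom_prime: "\<And>a b \<alpha> \<beta>. a \<in> Rg \<alpha> \<Longrightarrow> b \<in> Rg \<beta> \<Longrightarrow> a * b \<in> P \<Longrightarrow> a \<in> P \<or> b \<in> P"
    and a: "a \<in> R" "a \<notin> P" and b: "b \<in> R" "b \<notin> P"
  shows "a * b \<notin> P"
proof
  assume ab: "a * b \<in> P"
  have PM: "is_submod R P"
    using P unfolding is_ideal_def by auto
  obtain r :: "('g \<times> 'g) set" where r: "isolated_order r" and total: "\<And>x y. (x, y) \<in> r \<or> (y, x) \<in> r"
    using total_isolated_order_exists[OF torsion_free] by blast
  obtain a0 where a0: "hcomp a a0 \<notin> P" "\<And>x. hcomp a x \<notin> P \<Longrightarrow> (a0, x) \<in> r"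
    by (rule hcomp_least_outside[OF PM r total a]) blast
  obtain b0 where b0: "hcomp b b0 \<notin> P" "\<And>y. hcomp b y \<notin> P \<Longrightarrow> (b0, y) \<in> r"
    by (rule hcomp_least_outside[OF PM r total b]) blast
  have "hcomp a a0 \<noteq> 0" "hcomp b b0 \<noteq> 0"
    using a0(1) b0(1) submod_zero[OF PM] by auto
  with a0(2) b0(2) have low: "hcomp (a * b) (a0 + b0) - hcomp a a0 * hcomp b b0 \<in> P"
    by (rule hcomp_mult_lowest[OF PM r a(1) b(1)])
  have "hcomp (a * b) (a0 + b0) \<in> P"
    using P(2) ab unfolding hom_closed_def by blast
  from submod_diff[OF R_subring PM this low] have "hcomp a a0 * hcomp b b0 \<in> P"
    by simp
  then show False
    using hom_prime[OF hcomp_in_Rg[OF a(1)] hcomp_in_Rg[OF b(1)]] a0(1) b0(1) by blast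
qed

lemma nz_submod_ideal: "is_ideal R E \<Longrightarrow> E \<noteq> {0} \<Longrightarrow> nz_submod R E"
  unfolding is_ideal_def nz_submod_def by auto

lemma nz_submod_R: "nz_submod R R"
  unfolding nz_submod_def using is_submod_subring[OF R_subring] R_one by auto

lemma nz_frac_ideal_of_ideal: "nz_submod R F \<Longrightarrow> F \<subseteq> R \<Longrightarrow> nz_frac_ideal R F"
  unfolding nz_frac_ideal_def using R_one by (auto intro!: bexI[of _ 1])

lemma nz_submod_lin_comb:
  assumes "s \<in> S" "s \<noteq> 0"
  shows "nz_submod R (lin_comb R S)"
  unfolding nz_submod_def
  using is_submod_lin_comb[OF R_subring] lin_comb_gen[OF R_subring assms(1)] assms(2) by auto

lemma is_ideal_lin_comb: "S \<subseteq> R \<Longrightarrow> is_ideal R (lin_comb R S)"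
  unfolding is_ideal_def using is_submod_lin_comb[OF R_subring] lin_comb_subset[OF R_subring] by auto

lemma hom_comps_eq_range:
  assumes "x \<in> R"
  shows "hom_comps Rg x = range (hcomp x)"
  unfolding hom_comps_def using hcomp_unique hom_decomp_hcomp[OF assms] by blast

lemma finite_hom_comps:
  assumes x: "x \<in> R"
  shows "finite (hom_comps Rg x)"
proof -
  have "range (hcomp x) \<subseteq> insert 0 (hcomp x ` {\<alpha>. hcomp x \<alpha> \<noteq> 0})"
    by auto
  then have "finite (range (hcomp x))"
    by (rule finite_subset) (simp add: finite_hcomp_support[OF x])
  then show ?thesis
    using hom_comps_eq_range[OF x] by simp
qed

lemma hom_comps_hom: "x \<in> R \<Longrightarrow> hom_comps Rg x \<subseteq> (\<Union>\<alpha>. Rg \<alpha>)"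
  using hom_comps_eq_range hcomp_in_Rg by auto

definition content_gens :: "'k poly \<Rightarrow> 'k set" where
  "content_gens f = (\<Union>i\<le>degree f. hom_comps Rg (coeff f i))"

lemma content_A_eq_lin_comb: "content_A R Rg f = lin_comb R (content_gens f)"
  unfolding content_A_def content_C_def content_gens_def by (rule lin_comb_UN_lin_comb[OF R_subring])

lemma finite_content_gens: "f \<in> poly_over R \<Longrightarrow> finite (content_gens f)"
  unfolding content_gens_def using finite_hom_comps poly_over_coeff by auto

lemma content_gens_hom: "f \<in> poly_over R \<Longrightarrow> content_gens f \<subseteq> (\<Union>\<alpha>. Rg \<alpha>)"
  unfolding content_gens_def using hom_comps_hom poly_over_coeff by blast

lemma content_gens_R: "f \<in> poly_over R \<Longrightarrow> content_gens f \<subseteq> R"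
  using content_gens_hom Rg_subset_R by blast

lemma is_ideal_content_A: "f \<in> poly_over R \<Longrightarrow> is_ideal R (content_A R Rg f)"
  unfolding content_A_eq_lin_comb using is_ideal_lin_comb content_gens_R by blast

lemma hom_closed_content_A: "f \<in> poly_over R \<Longrightarrow> hom_closed (content_A R Rg f)"
  unfolding content_A_eq_lin_comb using hom_closed_lin_comb_hom content_gens_hom by blast

lemma fin_gen_content_A: "f \<in> poly_over R \<Longrightarrow> fin_gen R (content_A R Rg f)"
  unfolding content_A_eq_lin_comb using fin_gen_lin_comb finite_content_gens by blast

lemma coeff_in_content_A:
  assumes f: "f \<in> poly_over R" shows "coeff f i \<in> content_A R Rg f"
proof (cases "i \<le> degree f")
  case True
  have c: "coeff f i \<in> R" using poly_over_coeff[OF f] .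
  have "hcomp (coeff f i) \<alpha> \<in> content_gens f" for \<alpha>
    unfolding content_gens_def using True hom_comps_eq_range[OF c] by blast
  then have "hcomp (coeff f i) \<alpha> \<in> content_A R Rg f" for \<alpha>
    unfolding content_A_eq_lin_comb using lin_comb_gen[OF R_subring] by blast
  then show ?thesis using mem_submod_if_hcomps[OF c] is_ideal_content_A[OF f] unfolding is_ideal_def by blast
next
  case False
  then show ?thesis using lin_comb_zero unfolding content_A_eq_lin_comb by (simp add: coeff_eq_0)
qed

lemma nz_submod_content_A: "f \<in> poly_over R \<Longrightarrow> f \<noteq> 0 \<Longrightarrow> nz_submod R (content_A R Rg f)"
proof -
  assume f: "f \<in> poly_over R" "f \<noteq> 0"
  then obtain i where "coeff f i \<noteq> 0" by (metis leading_coeff_0_iff)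
  then show ?thesis using coeff_in_content_A[OF f(1), of i] is_ideal_content_A[OF f(1)] nz_submod_ideal by blast
qed

lemma content_A_subset:
  assumes f: "f \<in> poly_over R" and P: "is_ideal R P" "hom_closed P" and c: "\<And>i. coeff f i \<in> P"
  shows "content_A R Rg f \<subseteq> P"
  unfolding content_A_eq_lin_comb
proof (rule lin_comb_least)
  show "is_submod R P" using P unfolding is_ideal_def by auto
  show "content_gens f \<subseteq> P"
  proof
    fix z assume "z \<in> content_gens f"
    then obtain i where "z \<in> hom_comps Rg (coeff f i)" unfolding content_gens_def by blast
    then obtain \<alpha> where "z = hcomp (coeff f i) \<alpha>"
      using hom_comps_eq_range[OF poly_over_coeff[OF f]] by blast
    then show "z \<in> P" using c[of i] P(2) unfolding hom_closed_def by blast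
  qed
qed

lemma content_A_one: "content_A R Rg 1 = R"
proof -
  have "1 \<in> poly_over R" using poly_over_one[OF R_subring] .
  then have "coeff 1 0 \<in> content_A R Rg 1" by (rule coeff_in_content_A)
  then have "1 \<in> content_A R Rg 1" by simp
  moreover have "is_ideal R (content_A R Rg 1)"
    using is_ideal_content_A[OF poly_over_one[OF R_subring]] .
  ultimately show ?thesis
    unfolding is_ideal_def using submod_smult[of R "content_A R Rg 1" _ 1] by force
qed


lemma hcomp_mult_hom:
  assumes x: "x \<in> R" and w: "w \<in> Rg \<beta>"
  shows "hcomp (x * w) (\<epsilon> + \<beta>) = hcomp x \<epsilon> * w"
proof -
  have wR: "w \<in> R" using w Rg_subset_R by auto
  let ?S = "{\<alpha>. hcomp x \<alpha> \<noteq> 0}"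
  have c: "hcomp (x * w) (\<epsilon> + \<beta>) = (\<Sum>p\<in>{p\<in>?S \<times> {\<beta>}. fst p + snd p = \<epsilon> + \<beta>}. hcomp x (fst p) * hcomp w (snd p))"
    by (rule hcomp_mult[OF x wR finite_hcomp_support[OF x] order_refl]) (auto simp: hcomp_hom[OF w])
  show ?thesis
  proof (cases "\<epsilon> \<in> ?S")
    case True
    have e: "{p\<in>?S \<times> {\<beta>}. fst p + snd p = \<epsilon> + \<beta>} = {(\<epsilon>,\<beta>)}" using True by auto
    show ?thesis unfolding c e by (simp add: hcomp_hom[OF w])
  next
    case False
    have e: "{p\<in>?S \<times> {\<beta>}. fst p + snd p = \<epsilon> + \<beta>} = {}" using False by auto
    show ?thesis unfolding c e using False by simp
  qed
qed

lemma hcomp_hom_mult_factor: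
  assumes d: "d \<in> Rg \<gamma>" and m: "m \<in> R"
  obtains c where "c \<in> R" "hcomp (d * m) \<theta> = d * c"
proof -
  have dR: "d \<in> R"
    using d Rg_subset_R by auto
  let ?Q = "{p \<in> {\<gamma>} \<times> {\<alpha>. hcomp m \<alpha> \<noteq> 0}. fst p + snd p = \<theta>}"
  have "hcomp (d * m) \<theta> = (\<Sum>p\<in>?Q. hcomp d (fst p) * hcomp m (snd p))"
    by (rule hcomp_mult[OF dR m _ _ finite_hcomp_support[OF m] order_refl]) (auto simp: hcomp_hom[OF d])
  also have "\<dots> = d * (\<Sum>p\<in>?Q. hcomp m (snd p))"
    unfolding sum_distrib_left by (rule sum.cong) (auto simp: hcomp_hom[OF d])
  finally show ?thesis
    using that subring_sum[OF R_subring, of ?Q "\<lambda>p. hcomp m (snd p)"] hcomp_in_R[OF m] by blast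
qed

lemma homogeneous_factor:
  assumes d: "d \<in> Rg \<gamma>" "d \<noteq> 0" and m: "m \<in> R" and dm: "d * m \<in> Rg \<theta>"
  obtains \<eta> where "m \<in> Rg \<eta>"
proof (cases "m = 0")
  case True
  then show ?thesis
    using that Rg_zero by blast
next
  case False
  let ?T = "{\<alpha>. hcomp m \<alpha> \<noteq> 0}"
  have deg: "\<gamma> + \<eta> = \<theta>" if "\<eta> \<in> ?T" for \<eta>
  proof (rule ccontr)
    assume ne: "\<gamma> + \<eta> \<noteq> \<theta>"
    have "hcomp m \<eta> * d = hcomp (m * d) (\<eta> + \<gamma>)"
      by (rule hcomp_mult_hom[OF m d(1), symmetric])
    also have "\<dots> = 0"
      using hcomp_hom[OF dm] ne by (simp add: mult.commute add.commute)
    finally show False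
      using that d(2) by simp
  qed
  obtain \<eta>0 where "\<eta>0 \<in> ?T"
    using False sum_hcomp[OF m] by fastforce
  have "?T \<subseteq> {\<eta>0}"
  proof
    fix \<eta> assume "\<eta> \<in> ?T"
    then have "\<gamma> + \<eta> = \<gamma> + \<eta>0"
      using deg \<open>\<eta>0 \<in> ?T\<close> by simp
    then show "\<eta> \<in> {\<eta>0}"
      by simp
  qed
  then have "m = (\<Sum>\<alpha>\<in>{\<eta>0}. hcomp m \<alpha>)"
    by (rule sum_hcomp_superset[OF m, rotated]) simp
  then show ?thesis
    using that hcomp_in_Rg[OF m, of \<eta>0] by simp
qed

text \<open>Dividing the homogeneous components of d y by a nonzero homogeneous d \<in> I splits
  y \<in> (R : I) into pieces of K that are homogeneous and still lie in (R : I).\<close>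

lemma hcomp_div_in_colon:
  assumes I: "is_ideal R I" "hom_closed I" and d: "d \<in> I" "d \<in> Rg \<gamma>" "d \<noteq> 0"
    and y: "y \<in> colon R I"
  shows "hcomp (d * y) \<epsilon> / d \<in> colon R I"
  unfolding colon_def
proof (intro CollectI ballI)
  fix v assume v: "v \<in> I"
  have IR: "I \<subseteq> R"
    using I unfolding is_ideal_def by auto
  have dyR: "d * y \<in> R"
    using y d(1) unfolding colon_def by (auto simp: mult.commute)
  have comp_in_R: "hcomp (d * y) \<epsilon> / d * hcomp v \<beta> \<in> R" for \<beta>
  proof -
    let ?w = "hcomp v \<beta>"
    have w: "?w \<in> Rg \<beta>" "?w \<in> I"
      using hcomp_in_Rg v IR I(2) unfolding hom_closed_def by auto
    have "y * ?w \<in> R"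
      using y w(2) unfolding colon_def by auto
    then obtain c where c: "c \<in> R" "hcomp (d * (y * ?w)) (\<epsilon> + \<beta>) = d * c"
      using hcomp_hom_mult_factor[OF d(2)] by blast
    have "d * c = hcomp (d * y) \<epsilon> * ?w"
      using c(2) hcomp_mult_hom[OF dyR w(1)] by (simp add: mult.assoc)
    then have "hcomp (d * y) \<epsilon> / d * ?w = c"
      using d(3) by (simp add: field_simps)
    then show ?thesis
      using c(1) by simp
  qed
  have v_sum: "v = (\<Sum>\<beta>\<in>{\<beta>. hcomp v \<beta> \<noteq> 0}. hcomp v \<beta>)"
    using sum_hcomp v IR by blast
  have "hcomp (d * y) \<epsilon> / d * v
      = (\<Sum>\<beta>\<in>{\<beta>. hcomp v \<beta> \<noteq> 0}. hcomp (d * y) \<epsilon> / d * hcomp v \<beta>)"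
    by (subst (1) v_sum) (rule sum_distrib_left)
  also have "\<dots> \<in> R"
    by (intro subring_sum[OF R_subring] comp_in_R)
  finally show "hcomp (d * y) \<epsilon> / d * v \<in> R" .
qed

lemma hcomp_hom_mult_colon:
  assumes I: "is_ideal R I" "hom_closed I" and d: "d \<in> I" "d \<in> Rg \<gamma>" "d \<noteq> 0"
    and u: "u \<in> I" "u \<in> Rg \<alpha>" and y: "y \<in> colon R I"
  shows "hcomp (u * y) \<delta> \<in> submod_mult R I (colon R I)"
proof -
  define z where "z \<epsilon> = hcomp (d * y) \<epsilon> / d" for \<epsilon>
  have IR: "I \<subseteq> R"
    using I unfolding is_ideal_def by auto
  have dyR: "d * y \<in> R"
    using y d(1) unfolding colon_def by (auto simp: mult.commute)
  have zC: "z \<epsilon> \<in> colon R I" for \<epsilon>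
    unfolding z_def by (rule hcomp_div_in_colon[OF I d y])
  have uzR: "u * z \<epsilon> \<in> R" for \<epsilon>
    using zC[of \<epsilon>] u(1) unfolding colon_def by (auto simp: mult.commute)
  have "d * (u * z \<epsilon>) \<in> Rg (\<alpha> + \<epsilon>)" for \<epsilon>
    using Rg_mult[OF u(2) hcomp_in_Rg[OF dyR]] d(3) by (simp add: z_def)
  then have uz_hom: "\<exists>\<eta>. u * z \<epsilon> \<in> Rg \<eta>" for \<epsilon>
    by (rule homogeneous_factor[OF d(2,3) uzR]) blast
  have "d * (u * y) = u * (\<Sum>\<epsilon>\<in>{\<epsilon>. hcomp (d * y) \<epsilon> \<noteq> 0}. hcomp (d * y) \<epsilon>)"
    using sum_hcomp[OF dyR] by (simp add: ac_simps)
  also have "\<dots> = d * (\<Sum>\<epsilon>\<in>{\<epsilon>. hcomp (d * y) \<epsilon> \<noteq> 0}. u * z \<epsilon>)"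
    using d(3) by (simp add: z_def sum_distrib_left)
  finally have "u * y = (\<Sum>\<epsilon>\<in>{\<epsilon>. hcomp (d * y) \<epsilon> \<noteq> 0}. u * z \<epsilon>)"
    using d(3) by simp
  then have "hcomp (u * y) \<delta> = (\<Sum>\<epsilon>\<in>{\<epsilon>. hcomp (d * y) \<epsilon> \<noteq> 0}. hcomp (u * z \<epsilon>) \<delta>)"
    using d(3) hcomp_sum[OF uzR] by simp
  also have "\<dots> \<in> submod_mult R I (colon R I)"
    unfolding submod_mult_def
  proof (rule lin_comb_sum[OF R_subring])
    fix \<epsilon>
    obtain \<eta> where \<eta>: "u * z \<epsilon> \<in> Rg \<eta>"
      using uz_hom by blast
    have "u * z \<epsilon> \<in> {x * y | x y. x \<in> I \<and> y \<in> colon R I}"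
      using u(1) zC by blast
    then have "u * z \<epsilon> \<in> lin_comb R {x * y | x y. x \<in> I \<and> y \<in> colon R I}"
      by (rule lin_comb_gen[OF R_subring])
    then show "hcomp (u * z \<epsilon>) \<delta> \<in> lin_comb R {x * y | x y. x \<in> I \<and> y \<in> colon R I}"
      by (auto simp: hcomp_hom[OF \<eta>] intro: lin_comb_zero)
  qed
  finally show ?thesis .
qed

lemma hom_closed_nonzero_hom:
  assumes I: "is_ideal R I" "hom_closed I" and nz: "I \<noteq> {0}"
  obtains d \<gamma> where "d \<in> I" "d \<in> Rg \<gamma>" "d \<noteq> 0"
proof -
  obtain x where x: "x \<in> I" "x \<noteq> 0"
    using nz I unfolding is_ideal_def is_submod_def by blast
  have xR: "x \<in> R"
    using x I unfolding is_ideal_def by blast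
  then obtain \<gamma> where "hcomp x \<gamma> \<noteq> 0"
    using sum_hcomp[OF xR] x(2) by fastforce
  then show ?thesis
    using that I(2) x(1) hcomp_in_Rg[OF xR] unfolding hom_closed_def by blast
qed

lemma hcomp_mult_colon:
  assumes I: "is_ideal R I" "hom_closed I" and d: "d \<in> I" "d \<in> Rg \<gamma>" "d \<noteq> 0"
    and x: "x \<in> I" and y: "y \<in> colon R I"
  shows "hcomp (x * y) \<delta> \<in> submod_mult R I (colon R I)"
proof -
  have xR: "x \<in> R"
    using x I unfolding is_ideal_def by blast
  have "hcomp x \<beta> * y \<in> R" for \<beta>
    using x y I(2) unfolding colon_def hom_closed_def by (auto simp: mult.commute)
  moreover have "x * y = (\<Sum>\<beta>\<in>{\<beta>. hcomp x \<beta> \<noteq> 0}. hcomp x \<beta> * y)"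
    using sum_hcomp[OF xR] by (metis sum_distrib_right)
  ultimately have "hcomp (x * y) \<delta> = (\<Sum>\<beta>\<in>{\<beta>. hcomp x \<beta> \<noteq> 0}. hcomp (hcomp x \<beta> * y) \<delta>)"
    using hcomp_sum[of "{\<beta>. hcomp x \<beta> \<noteq> 0}" "\<lambda>\<beta>. hcomp x \<beta> * y" \<delta>] by simp
  also have "\<dots> \<in> submod_mult R I (colon R I)"
    unfolding submod_mult_def
  proof (rule lin_comb_sum[OF R_subring])
    fix \<beta>
    have "hcomp x \<beta> \<in> I"
      using x I(2) unfolding hom_closed_def by blast
    then show "hcomp (hcomp x \<beta> * y) \<delta> \<in> lin_comb R {x * y | x y. x \<in> I \<and> y \<in> colon R I}"
      using hcomp_hom_mult_colon[OF I d _ hcomp_in_Rg[OF xR] y] unfolding submod_mult_def by blast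
  qed
  finally show ?thesis .
qed

lemma hom_closed_ideal_colon_mult:
  assumes I: "is_ideal R I" "hom_closed I" and nz: "I \<noteq> {0}"
  shows "hom_closed (submod_mult R I (colon R I))"
proof -
  obtain d \<gamma> where d: "d \<in> I" "d \<in> Rg \<gamma>" "d \<noteq> 0"
    using hom_closed_nonzero_hom[OF I nz] by blast
  show ?thesis
    unfolding submod_mult_def
  proof (rule hom_closed_lin_comb)
    show "{x * y | x y. x \<in> I \<and> y \<in> colon R I} \<subseteq> R"
      unfolding colon_def by (auto simp: mult.commute)
    fix s \<delta> assume "s \<in> {x * y | x y. x \<in> I \<and> y \<in> colon R I}"
    then show "hcomp s \<delta> \<in> lin_comb R {x * y | x y. x \<in> I \<and> y \<in> colon R I}"
      using hcomp_mult_colon[OF I d] unfolding submod_mult_def by blast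
  qed
qed

end

section \<open>Semistar operations and the ring NA(R, star)\<close>

locale graded_semistar = graded_dom R Rg
  for R :: "'k::field set" and Rg :: "'g::cancel_comm_monoid_add \<Rightarrow> 'k set" +
  fixes st :: "'k set \<Rightarrow> 'k set"
  assumes semistar: "semistar R st"
begin

abbreviation "N_st \<equiv> N_star R Rg st"
abbreviation "NA_st \<equiv> NA R Rg st"

lemma st_nz_submod: "nz_submod R E \<Longrightarrow> nz_submod R (st E)"
  using semistar unfolding semistar_def by auto

lemma st_submod: "nz_submod R E \<Longrightarrow> is_submod R (st E)"
  using st_nz_submod unfolding nz_submod_def by auto

lemma st_scal: "x \<noteq> 0 \<Longrightarrow> nz_submod R E \<Longrightarrow> st (scal x E) = scal x (st E)"
  using semistar unfolding semistar_def by auto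

lemma st_mono: "nz_submod R E \<Longrightarrow> nz_submod R F \<Longrightarrow> E \<subseteq> F \<Longrightarrow> st E \<subseteq> st F"
  using semistar unfolding semistar_def by auto

lemma st_extensive: "nz_submod R E \<Longrightarrow> E \<subseteq> st E"
  using semistar unfolding semistar_def by auto

lemma st_idem: "nz_submod R E \<Longrightarrow> st (st E) = st E"
  using semistar unfolding semistar_def by auto

lemma st_eq_st_R:
  assumes E: "nz_submod R E" "E \<subseteq> R" and one: "1 \<in> st E"
  shows "st E = st R"
proof
  show "st E \<subseteq> st R"
    using st_mono[OF E(1) nz_submod_R E(2)] .
  have "R \<subseteq> st E"
    using submod_smult[OF st_submod[OF E(1)] _ one] by auto
  then have "st R \<subseteq> st (st E)"
    using st_mono[OF nz_submod_R st_nz_submod[OF E(1)]] by blast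
  then show "st R \<subseteq> st E"
    using st_idem[OF E(1)] by simp
qed

lemma one_in_st_R: "1 \<in> st R"
  using st_extensive[OF nz_submod_R] R_one by auto

lemma nz_submod_lin_comb_mult:
  assumes "nz_submod R (lin_comb R S)" "nz_submod R (lin_comb R T)"
  shows "nz_submod R (lin_comb R {x * y | x y. x \<in> S \<and> y \<in> T})"
proof -
  obtain s t where "s \<in> S" "s \<noteq> 0" "t \<in> T" "t \<noteq> 0"
    using assms lin_comb_nonzero_gen unfolding nz_submod_def by metis
  then show ?thesis
    by (intro nz_submod_lin_comb[of "s * t"]) auto
qed

text \<open>For x in E, x F* = (x F)* is contained in (E F)*, so 1 in F* gives E in (E F)*.\<close>

lemma one_in_st_lin_comb_mult:
  assumes S_nz: "nz_submod R (lin_comb R S)" and T_nz: "nz_submod R (lin_comb R T)"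
    and one_S: "1 \<in> st (lin_comb R S)" and one_T: "1 \<in> st (lin_comb R T)"
  shows "1 \<in> st (lin_comb R {x * y | x y. x \<in> S \<and> y \<in> T})"
proof -
  let ?F = "lin_comb R {x * y | x y. x \<in> S \<and> y \<in> T}"
  have F: "nz_submod R ?F"
    by (rule nz_submod_lin_comb_mult[OF S_nz T_nz])
  have "x \<in> st ?F" if x: "x \<in> S" "x \<noteq> 0" for x
  proof -
    have "lin_comb R T \<subseteq> {y. x * y \<in> ?F}"
      by (rule lin_comb_least[OF is_submod_mult_preimage[OF is_submod_lin_comb[OF R_subring]]])
        (use x in \<open>blast intro: lin_comb_gen[OF R_subring]\<close>)
    then have "st (scal x (lin_comb R T)) \<subseteq> st ?F"
      by (intro st_mono[OF nz_submod_scal[OF x(2) T_nz] F]) (auto simp: scal_def)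
    then show "x \<in> st ?F"
      using st_scal[OF x(2) T_nz] one_T unfolding scal_def by force
  qed
  then have "S \<subseteq> st ?F"
    using submod_zero[OF st_submod[OF F]] by blast
  then have "lin_comb R S \<subseteq> st ?F"
    by (rule lin_comb_least[OF st_submod[OF F]])
  then have "st (lin_comb R S) \<subseteq> st ?F"
    using st_mono[OF S_nz st_nz_submod[OF F]] st_idem[OF F] by simp
  then show ?thesis
    using one_S by blast
qed

lemma star_f_subset_st_R: assumes "E \<subseteq> R" shows "star_f R st E \<subseteq> st R"
proof
  fix z assume "z \<in> star_f R st E"
  then obtain F where F: "F \<subseteq> E" "nz_frac_ideal R F" "z \<in> st F"
    unfolding star_f_def by blast
  have "st F \<subseteq> st R"
    by (rule st_mono) (use F assms nz_submod_R in \<open>auto simp: nz_frac_ideal_def\<close>)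
  then show "z \<in> st R" using F by blast
qed

lemma st_subset_star_f: "F \<subseteq> E \<Longrightarrow> nz_frac_ideal R F \<Longrightarrow> fin_gen R F \<Longrightarrow> st F \<subseteq> star_f R st E"
  unfolding star_f_def by blast

lemma star_f_subset_st: assumes "nz_submod R E" shows "star_f R st E \<subseteq> st E"
proof
  fix z assume "z \<in> star_f R st E"
  then obtain F where F: "F \<subseteq> E" "nz_frac_ideal R F" "z \<in> st F"
    unfolding star_f_def by blast
  have "st F \<subseteq> st E" by (rule st_mono) (use F assms in \<open>auto simp: nz_frac_ideal_def\<close>)
  then show "z \<in> st E" using F by blast
qed

lemma one_in_star_fE:
  assumes "1 \<in> star_f R st J"
  obtains S where "finite S" "S \<subseteq> J" "nz_submod R (lin_comb R S)" "1 \<in> st (lin_comb R S)"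
proof -
  obtain F where F: "F \<subseteq> J" "nz_frac_ideal R F" "fin_gen R F" "1 \<in> st F"
    using assms unfolding star_f_def by blast
  then obtain S where "finite S" "F = lin_comb R S"
    unfolding fin_gen_def by blast
  then show ?thesis
    using that F lin_comb_gen[OF R_subring, of _ S] unfolding nz_frac_ideal_def by blast
qed

lemma one_in_star_fI:
  assumes "finite S" "S \<subseteq> J" "is_ideal R J" "nz_submod R (lin_comb R S)" "1 \<in> st (lin_comb R S)"
  shows "1 \<in> star_f R st J"
proof -
  have "lin_comb R S \<subseteq> J"
    using assms(2,3) lin_comb_least unfolding is_ideal_def by blast
  moreover have "nz_frac_ideal R (lin_comb R S)"
    using nz_frac_ideal_of_ideal[OF assms(4)] \<open>lin_comb R S \<subseteq> J\<close> assms(3)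
    unfolding is_ideal_def by blast
  ultimately show ?thesis
    using st_subset_star_f fin_gen_lin_comb[OF assms(1)] assms(5) by blast
qed

definition proper_hom_ideals :: "'k set \<Rightarrow> 'k set set" where
  "proper_hom_ideals A = {J. is_ideal R J \<and> hom_closed J \<and> A \<subseteq> J \<and> 1 \<notin> star_f R st J}"

lemma Union_chain_proper_hom_ideals:
  assumes C: "C \<in> chains (proper_hom_ideals A)" "C \<noteq> {}"
  shows "\<Union>C \<in> proper_hom_ideals A"
proof -
  have J: "is_ideal R J" "hom_closed J" "A \<subseteq> J" "1 \<notin> star_f R st J" if "J \<in> C" for J
    using C that unfolding chains_def proper_hom_ideals_def by blast+
  have chain: "X \<subseteq> Y \<or> Y \<subseteq> X" if "X \<in> C" "Y \<in> C" for X Y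
    using C that unfolding chains_def chain_subset_def by blast
  have "is_ideal R (\<Union>C)"
    by (rule is_ideal_Union_chain[OF chain C(2) J(1)])
  moreover have "hom_closed (\<Union>C)"
    using J(2) unfolding hom_closed_def by blast
  moreover have "A \<subseteq> \<Union>C"
    using J(3) C(2) by blast
  moreover have "1 \<notin> star_f R st (\<Union>C)"
  proof
    assume "1 \<in> star_f R st (\<Union>C)"
    then obtain S where S: "finite S" "S \<subseteq> \<Union>C" "nz_submod R (lin_comb R S)" "1 \<in> st (lin_comb R S)"
      by (rule one_in_star_fE) blast
    obtain K where "K \<in> C" "S \<subseteq> K"
      by (rule finite_subset_chain_member[OF chain C(2) S(1,2)]) blast
    then show False
      using one_in_star_fI[OF S(1) _ _ S(3,4)] J(1,4) by blast
  qed
  ultimately show ?thesis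
    unfolding proper_hom_ideals_def by blast
qed

lemma ideal_insert_hom:
  assumes P: "is_ideal R P" "hom_closed P" and a: "a \<in> Rg \<alpha>"
  shows "is_ideal R (lin_comb R (insert a P))" "hom_closed (lin_comb R (insert a P))"
proof -
  have "insert a P \<subseteq> R"
    using P a Rg_subset_R unfolding is_ideal_def by blast
  then show "is_ideal R (lin_comb R (insert a P))"
    by (rule is_ideal_lin_comb)
  show "hom_closed (lin_comb R (insert a P))"
  proof (rule hom_closed_lin_comb[OF \<open>insert a P \<subseteq> R\<close>])
    fix s \<beta> assume "s \<in> insert a P"
    then show "hcomp s \<beta> \<in> lin_comb R (insert a P)"
      using P(2) hcomp_hom[OF a] lin_comb_gen[OF R_subring] lin_comb_zero
      unfolding hom_closed_def by (cases "\<beta> = \<alpha>") auto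
  qed
qed

lemma one_in_star_f_mult:
  assumes E: "1 \<in> star_f R st E" and F: "1 \<in> star_f R st F" and P: "is_ideal R P"
    and EF: "\<And>x y. x \<in> E \<Longrightarrow> y \<in> F \<Longrightarrow> x * y \<in> P"
  shows "1 \<in> star_f R st P"
proof -
  obtain S where S: "finite S" "S \<subseteq> E" "nz_submod R (lin_comb R S)" "1 \<in> st (lin_comb R S)"
    using E by (rule one_in_star_fE) blast
  obtain T where T: "finite T" "T \<subseteq> F" "nz_submod R (lin_comb R T)" "1 \<in> st (lin_comb R T)"
    using F by (rule one_in_star_fE) blast
  show ?thesis
  proof (rule one_in_star_fI[OF _ _ P nz_submod_lin_comb_mult[OF S(3) T(3)]])
    show "finite {x * y | x y. x \<in> S \<and> y \<in> T}"
      using finite_image_set2[of "\<lambda>x. x \<in> S" "\<lambda>y. y \<in> T" "(*)"] S(1) T(1) by simp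
    show "{x * y | x y. x \<in> S \<and> y \<in> T} \<subseteq> P"
      using EF S(2) T(2) by blast
    show "1 \<in> st (lin_comb R {x * y | x y. x \<in> S \<and> y \<in> T})"
      by (rule one_in_st_lin_comb_mult[OF S(3) T(3) S(4) T(4)])
  qed
qed

lemma one_in_star_f_insert_if_maximal:
  assumes P: "P \<in> proper_hom_ideals A" and max: "\<And>J. J \<in> proper_hom_ideals A \<Longrightarrow> P \<subseteq> J \<Longrightarrow> J = P"
    and c: "c \<in> Rg \<gamma>" "c \<notin> P"
  shows "1 \<in> star_f R st (lin_comb R (insert c P))"
proof (rule ccontr)
  assume "1 \<notin> star_f R st (lin_comb R (insert c P))"
  moreover have "P \<subseteq> lin_comb R (insert c P)"
    using lin_comb_gen[OF R_subring] by blast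
  moreover have "is_ideal R P" "hom_closed P" "A \<subseteq> P"
    using P unfolding proper_hom_ideals_def by auto
  ultimately have "lin_comb R (insert c P) \<in> proper_hom_ideals A"
    using ideal_insert_hom[OF _ _ c(1)] unfolding proper_hom_ideals_def by blast
  then have "lin_comb R (insert c P) = P"
    using max \<open>P \<subseteq> lin_comb R (insert c P)\<close> by blast
  then show False
    using c(2) lin_comb_gen[OF R_subring, of c "insert c P"] by blast
qed

text \<open>If a b \<in> P with a, b \<notin> P, maximality puts 1 into the star_f-closures of P + R a and
  P + R b, hence into that of P, which contains their product.\<close>

lemma maximal_proper_hom_ideal_hom_prime:
  assumes P: "P \<in> proper_hom_ideals A" and max: "\<And>J. J \<in> proper_hom_ideals A \<Longrightarrow> P \<subseteq> J \<Longrightarrow> J = P"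
    and a: "a \<in> Rg \<alpha>" and b: "b \<in> Rg \<beta>" and ab: "a * b \<in> P"
  shows "a \<in> P \<or> b \<in> P"
proof (rule ccontr)
  assume not_in: "\<not> (a \<in> P \<or> b \<in> P)"
  have Pi: "is_ideal R P" "1 \<notin> star_f R st P"
    using P unfolding proper_hom_ideals_def by auto
  have "x * y \<in> P" if "x \<in> lin_comb R (insert a P)" "y \<in> lin_comb R (insert b P)" for x y
    using lin_comb_insert_mult_subset[OF R_subring _ _ _ _ ab that] a b Rg_subset_R Pi(1)
    unfolding is_ideal_def by blast
  then have "1 \<in> star_f R st P"
    using one_in_star_f_mult[OF one_in_star_f_insert_if_maximal[OF P max a]
        one_in_star_f_insert_if_maximal[OF P max b] Pi(1)] not_in by blast
  then show False
    using Pi(2) by blast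
qed

lemma hom_quasi_prime_exists:
  assumes A: "is_ideal R A" "hom_closed A" "1 \<notin> star_f R st A"
  obtains P where "is_ideal R P" "hom_closed P" "A \<subseteq> P" "1 \<notin> star_f R st P"
    "\<And>a b \<alpha> \<beta>. a \<in> Rg \<alpha> \<Longrightarrow> b \<in> Rg \<beta> \<Longrightarrow> a * b \<in> P \<Longrightarrow> a \<in> P \<or> b \<in> P"
proof -
  have "\<forall>C\<in>chains (proper_hom_ideals A). \<exists>U\<in>proper_hom_ideals A. \<forall>X\<in>C. X \<subseteq> U"
  proof
    fix C assume C: "C \<in> chains (proper_hom_ideals A)"
    show "\<exists>U\<in>proper_hom_ideals A. \<forall>X\<in>C. X \<subseteq> U"
    proof (cases "C = {}")
      case True
      then show ?thesis
        using A unfolding proper_hom_ideals_def by blast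
    next
      case False
      then show ?thesis
        using Union_chain_proper_hom_ideals[OF C] by blast
    qed
  qed
  from Zorn_Lemma2[OF this] obtain P where P: "P \<in> proper_hom_ideals A"
    and max: "\<forall>J\<in>proper_hom_ideals A. P \<subseteq> J \<longrightarrow> J = P"
    by blast
  show ?thesis
    using that P maximal_proper_hom_ideal_hom_prime[OF P] max unfolding proper_hom_ideals_def
    by blast
qed

lemma N_star_coeff_not_in:
  assumes h: "h \<in> N_st" and P: "is_ideal R P" "hom_closed P" "1 \<notin> star_f R st P"
  obtains i where "coeff h i \<notin> P"
proof -
  have hp: "h \<in> poly_over R" "h \<noteq> 0" "st (content_A R Rg h) = st R"
    using h unfolding N_star_def by auto
  have "\<not> content_A R Rg h \<subseteq> P"
  proof
    assume "content_A R Rg h \<subseteq> P"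
    then have "st (content_A R Rg h) \<subseteq> star_f R st P"
      using st_subset_star_f nz_frac_ideal_of_ideal[OF nz_submod_content_A[OF hp(1,2)]]
        is_ideal_content_A[OF hp(1)] fin_gen_content_A[OF hp(1)] unfolding is_ideal_def by blast
    then show False
      using hp(3) one_in_st_R P(3) by auto
  qed
  then show ?thesis
    using that content_A_subset[OF hp(1) P(1,2)] by blast
qed

lemma N_star_mult:
  assumes f: "f \<in> N_st" and g: "g \<in> N_st"
  shows "f * g \<in> N_st"
proof -
  have fp: "f \<in> poly_over R" "f \<noteq> 0" and gp: "g \<in> poly_over R" "g \<noteq> 0"
    using f g unfolding N_star_def by auto
  have fg: "f * g \<in> poly_over R" "f * g \<noteq> 0"
    using poly_over_mult[OF R_subring fp(1) gp(1)] fp gp by auto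
  let ?A = "content_A R Rg (f * g)"
  have A: "nz_submod R ?A" "is_ideal R ?A" "hom_closed ?A"
    using nz_submod_content_A[OF fg] is_ideal_content_A[OF fg(1)] hom_closed_content_A[OF fg(1)] .
  have "st ?A = st R"
  proof (rule ccontr)
    assume "st ?A \<noteq> st R"
    then have "1 \<notin> star_f R st ?A"
      using st_eq_st_R[OF A(1)] star_f_subset_st[OF A(1)] A(2) unfolding is_ideal_def by blast
    then obtain P where P: "is_ideal R P" "hom_closed P" "?A \<subseteq> P" "1 \<notin> star_f R st P"
      and hom_prime: "\<And>a b \<alpha> \<beta>. a \<in> Rg \<alpha> \<Longrightarrow> b \<in> Rg \<beta> \<Longrightarrow> a * b \<in> P \<Longrightarrow> a \<in> P \<or> b \<in> P"
      using hom_quasi_prime_exists[OF A(2,3)] by blast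
    obtain i j where "coeff f i \<notin> P" "coeff g j \<notin> P"
      using N_star_coeff_not_in[OF f P(1,2,4)] N_star_coeff_not_in[OF g P(1,2,4)] by metis
    moreover have "a * b \<notin> P" if "a \<in> R" "a \<notin> P" "b \<in> R" "b \<notin> P" for a b
      using hom_prime that by (rule hom_prime_imp_prime[OF P(1,2)])
    then have "a * b \<in> P \<Longrightarrow> a \<in> P \<or> b \<in> P" if "a \<in> R" "b \<in> R" for a b
      using that by blast
    ultimately obtain n where "coeff (f * g) n \<notin> P"
      using prime_coeff_mult[OF R_subring _ _ fp(1) gp(1)] P(1) unfolding is_ideal_def by blast
    then show False
      using coeff_in_content_A[OF fg(1)] P(3) by blast
  qed
  then show ?thesis
    unfolding N_star_def using fg by auto
qed

lemma N_star_one: "1 \<in> N_st"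
  unfolding N_star_def using poly_over_one[OF R_subring] content_A_one by auto

lemma N_star_nonzero: "q \<in> N_st \<Longrightarrow> q \<noteq> 0"
  unfolding N_star_def by auto

lemma N_star_poly_over: "q \<in> N_st \<Longrightarrow> q \<in> poly_over R"
  unfolding N_star_def by auto

lemma Fract_in_NA: "f \<in> poly_over R \<Longrightarrow> q \<in> N_st \<Longrightarrow> Fract f q \<in> NA_st"
  unfolding NA_def by blast

lemma NAE:
  assumes "z \<in> NA_st"
  obtains f q where "f \<in> poly_over R" "q \<in> N_st" "z = Fract f q"
  using assms unfolding NA_def by blast

lemma is_subring_NA: "is_subring NA_st"
  unfolding is_subring_def
proof (intro conjI ballI)
  show "1 \<in> NA_st"
    using Fract_in_NA[OF poly_over_one[OF R_subring] N_star_one] by (simp add: fract_collapse)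
  show "0 \<in> NA_st"
    using Fract_in_NA[OF poly_over_zero[OF R_subring] N_star_one] by (simp add: fract_collapse)
next
  fix x y assume x: "x \<in> NA_st" and y: "y \<in> NA_st"
  obtain f q where f: "f \<in> poly_over R" "q \<in> N_st" "x = Fract f q"
    using x by (rule NAE)
  obtain g r where g: "g \<in> poly_over R" "r \<in> N_st" "y = Fract g r"
    using y by (rule NAE)
  have qr: "q * r \<in> N_st"
    using N_star_mult f g by blast
  have "x + y = Fract (f * r + g * q) (q * r)"
    using f g N_star_nonzero by simp
  moreover have "f * r + g * q \<in> poly_over R"
    using poly_over_add[OF R_subring] poly_over_mult[OF R_subring] f g N_star_poly_over by blast
  ultimately show "x + y \<in> NA_st"
    using Fract_in_NA qr by simp
  have "x * y = Fract (f * g) (q * r)"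
    using f g by simp
  moreover have "f * g \<in> poly_over R"
    using poly_over_mult[OF R_subring] f g by blast
  ultimately show "x * y \<in> NA_st"
    using Fract_in_NA qr by simp
next
  fix x assume "x \<in> NA_st"
  then obtain f q where "f \<in> poly_over R" "q \<in> N_st" "x = Fract f q"
    by (rule NAE)
  then show "- x \<in> NA_st"
    using Fract_in_NA poly_over_uminus[OF R_subring] by simp
qed

lemma const_in_NA: "a \<in> R \<Longrightarrow> Fract [:a:] 1 \<in> NA_st"
  using Fract_in_NA[OF poly_over_const[OF R_subring] N_star_one] by simp

end

section \<open>Invertibility of I and of I NA(R, star)\<close>

context graded_semistar
begin

lemma const_in_ext_NA: "a \<in> I \<Longrightarrow> Fract [:a:] 1 \<in> ext_NA R Rg st I"
  unfolding ext_NA_def by (rule lin_comb_gen[OF is_subring_NA]) blast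

lemma nz_frac_ideal_ext_NA:
  assumes I: "is_ideal R I" "I \<noteq> {0}"
  shows "nz_frac_ideal NA_st (ext_NA R Rg st I)"
proof -
  have "(\<lambda>a. Fract [:a:] 1) ` I \<subseteq> NA_st"
    using const_in_NA I(1) unfolding is_ideal_def by blast
  then have sub: "ext_NA R Rg st I \<subseteq> NA_st"
    unfolding ext_NA_def by (rule lin_comb_subset[OF is_subring_NA])
  obtain a where "a \<in> I" "a \<noteq> 0"
    using I unfolding is_ideal_def is_submod_def by blast
  then have "Fract [:a:] 1 \<in> ext_NA R Rg st I" "Fract [:a:] 1 \<noteq> 0"
    using const_in_ext_NA by (simp_all add: Zero_fract_def eq_fract)
  then have "nz_submod NA_st (ext_NA R Rg st I)"
    unfolding nz_submod_def ext_NA_def using is_submod_lin_comb[OF is_subring_NA] by blast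
  then show ?thesis
    unfolding nz_frac_ideal_def using sub subring_one[OF is_subring_NA]
    by (intro conjI bexI[of _ 1]) auto
qed

lemma Fract_monom_in_colon_ext_NA:
  assumes c: "c \<in> colon R I" and f: "f \<in> N_st"
  shows "Fract (monom c i) f \<in> colon NA_st (ext_NA R Rg st I)"
proof -
  let ?w = "Fract (monom c i) f"
  have "(\<lambda>a. Fract [:a:] 1) ` I \<subseteq> {z. ?w * z \<in> NA_st}"
  proof
    fix z assume "z \<in> (\<lambda>a. Fract [:a:] 1) ` I"
    then obtain u where u: "u \<in> I" "z = Fract [:u:] 1"
      by blast
    have "c * u \<in> R"
      using c u(1) unfolding colon_def by blast
    then have "Fract (monom (c * u) i) f \<in> NA_st"
      by (rule Fract_in_NA[OF poly_over_monom[OF R_subring] f])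
    moreover have "?w * z = Fract (monom (c * u) i) f"
      unfolding u(2) by (simp add: smult_monom mult.commute[of c u])
    ultimately show "z \<in> {z. ?w * z \<in> NA_st}"
      by simp
  qed
  then have "ext_NA R Rg st I \<subseteq> {z. ?w * z \<in> NA_st}"
    unfolding ext_NA_def
    by (rule lin_comb_least[OF is_submod_mult_preimage[OF is_submod_subring[OF is_subring_NA]]])
  then show ?thesis
    unfolding colon_def by blast
qed

lemma Fract_monom_in_ext_NA_mult_colon:
  assumes I: "is_ideal R I" and x: "x \<in> submod_mult R I (colon R I)" and f: "f \<in> N_st"
  shows "Fract (monom x i) f \<in> submod_mult NA_st (ext_NA R Rg st I) (colon NA_st (ext_NA R Rg st I))"
proof -
  let ?J = "ext_NA R Rg st I"
  have "x \<in> submod_mult R (lin_comb R I) (colon R I)"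
    using x lin_comb_of_submod[OF R_subring] I unfolding is_ideal_def by simp
  then obtain n :: nat and g c where gc: "\<forall>k<n. g k \<in> I" "\<forall>k<n. c k \<in> colon R I"
      and x_eq: "x = (\<Sum>k<n. g k * c k)"
    by (rule submod_mult_lin_comb_sum[OF is_submod_colon[OF R_subring]]) blast
  have "Fract (monom x i) f = (\<Sum>k<n. Fract [:g k:] 1 * Fract (monom (c k) i) f)"
    unfolding x_eq monom_sum Fract_sum[OF N_star_nonzero[OF f]] by (simp add: smult_monom)
  also have "\<dots> \<in> submod_mult NA_st ?J (colon NA_st ?J)"
    unfolding submod_mult_def
  proof (rule lin_comb_sum[OF is_subring_NA])
    fix k assume "k \<in> {..<n}"
    then have "Fract [:g k:] 1 * Fract (monom (c k) i) f \<in> {x * y | x y. x \<in> ?J \<and> y \<in> colon NA_st ?J}"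
      using const_in_ext_NA gc Fract_monom_in_colon_ext_NA[OF _ f] by blast
    then show "Fract [:g k:] 1 * Fract (monom (c k) i) f \<in> lin_comb NA_st {x * y | x y. x \<in> ?J \<and> y \<in> colon NA_st ?J}"
      by (rule lin_comb_gen[OF is_subring_NA])
  qed
  finally show ?thesis .
qed

lemma star_f_invertible_imp_N_star_coeffs:
  assumes I: "is_ideal R I" and inv: "star_f_invertible R st I"
  obtains f where "f \<in> N_st" "\<And>i. coeff f i \<in> submod_mult R I (colon R I)"
proof -
  let ?E = "submod_mult R I (colon R I)"
  have "1 \<in> star_f R st ?E"
    using inv one_in_st_R unfolding star_f_invertible_def by simp
  then obtain S where S: "finite S" "S \<subseteq> ?E" "nz_submod R (lin_comb R S)" "1 \<in> st (lin_comb R S)"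
    by (rule one_in_star_fE) blast
  obtain ss where ss: "set ss = S" "distinct ss"
    using finite_distinct_list[OF S(1)] by blast
  define f where "f = (\<Sum>i<length ss. monom (ss ! i) i)"
  have coeff_f: "coeff f k = (if k < length ss then ss ! k else 0)" for k
    unfolding f_def coeff_sum coeff_monom by (simp add: sum.delta)
  have "S \<subseteq> R"
    using S(2) lin_comb_subset[OF R_subring, of "{x * y | x y. x \<in> I \<and> y \<in> colon R I}"]
    unfolding submod_mult_def colon_def by (force simp: mult.commute)
  then have fp: "f \<in> poly_over R"
    unfolding poly_over_def using coeff_f ss(1) R_zero by auto
  have S_coeff: "\<exists>k. s = coeff f k" if "s \<in> S" for s
    using that ss(1) coeff_f by (metis in_set_conv_nth)
  then have SA: "S \<subseteq> content_A R Rg f"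
    using coeff_in_content_A[OF fp] by blast
  then have "lin_comb R S \<subseteq> content_A R Rg f"
    using lin_comb_least is_ideal_content_A[OF fp] unfolding is_ideal_def by blast
  moreover have "f \<noteq> 0"
  proof -
    obtain s where "s \<in> S" "s \<noteq> 0"
      using S(3) lin_comb_nonzero_gen unfolding nz_submod_def by metis
    then show ?thesis
      using S_coeff by force
  qed
  ultimately have "1 \<in> st (content_A R Rg f)"
    using st_mono[OF S(3) nz_submod_content_A[OF fp]] S(4) by blast
  then have "f \<in> N_st"
    using st_eq_st_R[OF nz_submod_content_A[OF fp \<open>f \<noteq> 0\<close>]] is_ideal_content_A[OF fp] fp \<open>f \<noteq> 0\<close>
    unfolding N_star_def is_ideal_def by blast
  moreover have "coeff f i \<in> ?E" for i
    using coeff_f ss(1) S(2) submod_zero[OF is_submod_lin_comb[OF R_subring]]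
    unfolding submod_mult_def by auto
  ultimately show ?thesis
    using that by blast
qed

lemma ext_NA_invertible_if_N_star_coeffs:
  assumes I: "is_ideal R I" "I \<noteq> {0}"
    and f: "f \<in> N_st" and coeffs: "\<And>i. coeff f i \<in> submod_mult R I (colon R I)"
  shows "invertible_ideal NA_st (ext_NA R Rg st I)"
proof (rule invertible_idealI[OF is_subring_NA nz_frac_ideal_ext_NA[OF I]])
  have f0: "f \<noteq> 0"
    by (rule N_star_nonzero[OF f])
  have "1 = Fract f f"
    using Fract_self[OF f0] by simp
  also have "\<dots> = (\<Sum>i\<le>degree f. Fract (monom (coeff f i) i) f)"
    by (subst (1) poly_as_sum_of_monoms[symmetric]) (rule Fract_sum[OF f0])
  also have "\<dots> \<in> submod_mult NA_st (ext_NA R Rg st I) (colon NA_st (ext_NA R Rg st I))"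
    unfolding submod_mult_def
    by (rule submod_sum[OF is_submod_lin_comb[OF is_subring_NA]])
      (rule Fract_monom_in_ext_NA_mult_colon[OF I(1) coeffs f, unfolded submod_mult_def])
  finally show "1 \<in> submod_mult NA_st (ext_NA R Rg st I) (colon NA_st (ext_NA R Rg st I))" .
qed

lemma NA_common_denominator_insert:
  assumes s: "s \<in> N_st" "\<forall>k\<in>F. \<exists>p\<in>poly_over R. Fract s 1 * z k = Fract p 1"
    and x: "z x \<in> NA_st"
  shows "\<exists>s'\<in>N_st. \<forall>k\<in>insert x F. \<exists>p\<in>poly_over R. Fract s' 1 * z k = Fract p 1"
proof -
  obtain f q where fq: "f \<in> poly_over R" "q \<in> N_st" "z x = Fract f q"
    using x by (rule NAE)
  have "\<exists>p\<in>poly_over R. Fract (s * q) 1 * z k = Fract p 1" if "k \<in> insert x F" for k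
  proof (cases "k = x")
    case True
    have "Fract (s * q) 1 * z k = Fract (s * q * f) q"
      using True fq(3) by simp
    also have "\<dots> = Fract (s * f) 1"
      using N_star_nonzero[OF fq(2)] by (simp add: eq_fract)
    finally show ?thesis
      using poly_over_mult[OF R_subring N_star_poly_over[OF s(1)] fq(1)] by blast
  next
    case False
    then have "k \<in> F"
      using that by simp
    then obtain p where p: "p \<in> poly_over R" "Fract s 1 * z k = Fract p 1"
      using s(2) by blast
    have "Fract (s * q) 1 = Fract q 1 * Fract s 1"
      by (simp add: mult.commute)
    then have "Fract (s * q) 1 * z k = Fract q 1 * (Fract s 1 * z k)"
      by (simp only: mult.assoc)
    also have "\<dots> = Fract (q * p) 1"
      using p(2) by simp
    finally show ?thesis
      using poly_over_mult[OF R_subring N_star_poly_over[OF fq(2)] p(1)] by blast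
  qed
  then show ?thesis
    by (intro bexI[OF _ N_star_mult[OF s(1) fq(2)]]) blast
qed

lemma NA_common_denominator:
  assumes "finite K" "\<And>k. k \<in> K \<Longrightarrow> z k \<in> NA_st"
  obtains s where "s \<in> N_st" "\<And>k. k \<in> K \<Longrightarrow> \<exists>p\<in>poly_over R. Fract s 1 * z k = Fract p 1"
proof -
  have "\<exists>s\<in>N_st. \<forall>k\<in>K. \<exists>p\<in>poly_over R. Fract s 1 * z k = Fract p 1"
    using assms
  proof (induction K rule: finite_induct)
    case empty
    show ?case
      using N_star_one by blast
  next
    case (insert x F)
    have "\<exists>s\<in>N_st. \<forall>k\<in>F. \<exists>p\<in>poly_over R. Fract s 1 * z k = Fract p 1"
      by (rule insert.IH) (use insert.prems in blast)
    then obtain s where "s \<in> N_st" "\<forall>k\<in>F. \<exists>p\<in>poly_over R. Fract s 1 * z k = Fract p 1"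
      by blast
    moreover have "z x \<in> NA_st"
      using insert.prems by blast
    ultimately show ?case
      by (rule NA_common_denominator_insert)
  qed
  then show ?thesis
    using that by blast
qed

text \<open>h is the polynomial s w g0 divided by the nonzero generator g0; then b h is a polynomial
  over R for every generator b of I.\<close>

lemma clear_denominator_coeffs_in_colon:
  assumes I: "I = lin_comb R Gs" and g0: "g0 \<in> Gs" "g0 \<noteq> 0"
    and clear: "\<And>b. b \<in> Gs \<Longrightarrow> \<exists>p\<in>poly_over R. Fract s 1 * (w * Fract [:b:] 1) = Fract p 1"
  obtains h where "Fract s 1 * w = Fract h 1" "\<forall>i. coeff h i \<in> colon R I"
proof -
  obtain p0 where p0: "Fract s 1 * (w * Fract [:g0:] 1) = Fract p0 1"
    using clear[OF g0(1)] by blast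
  define h where "h = smult (inverse g0) p0"
  have "Fract s 1 * w = Fract s 1 * (w * Fract [:g0:] 1) * Fract 1 [:g0:]"
    using g0(2) by (simp add: Fract_self mult.assoc)
  also have "\<dots> = Fract h 1"
    using g0(2) by (simp add: p0 h_def eq_fract)
  finally have h: "Fract s 1 * w = Fract h 1" .
  have "smult b h \<in> poly_over R" if b: "b \<in> Gs" for b
  proof -
    obtain p where p: "p \<in> poly_over R" "Fract s 1 * (w * Fract [:b:] 1) = Fract p 1"
      using clear[OF b] by blast
    have "Fract (smult b h) 1 = Fract [:b:] 1 * (Fract s 1 * w)"
      by (simp add: h)
    also have "\<dots> = Fract p 1"
      using p(2) by (simp add: ac_simps)
    finally show ?thesis
      using p(1) by (simp add: Fract_1_eq_iff)
  qed
  then show ?thesis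
    using that h coeff_in_colon_if_smult[OF R_subring I] by blast
qed

lemma colon_ext_NA_clear_denominators:
  assumes Gs: "finite Gs" "I = lin_comb R Gs" and g0: "g0 \<in> Gs" "g0 \<noteq> 0"
    and K: "finite K" and w: "\<forall>k\<in>K. w k \<in> colon NA_st (ext_NA R Rg st I)"
  obtains s h where "s \<in> N_st"
    "\<forall>k\<in>K. Fract s 1 * w k = Fract (h k) 1 \<and> (\<forall>i. coeff (h k) i \<in> colon R I)"
proof -
  have Gs_I: "Gs \<subseteq> I"
    using Gs(2) lin_comb_gen[OF R_subring] by blast
  have wNA: "(\<lambda>(k, b). w k * Fract [:b:] 1) kb \<in> NA_st" if "kb \<in> K \<times> Gs" for kb
    using w const_in_ext_NA Gs_I that unfolding colon_def by auto
  obtain s where s: "s \<in> N_st" and clear: "\<And>kb. kb \<in> K \<times> Gs \<Longrightarrow>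
      \<exists>p\<in>poly_over R. Fract s 1 * (\<lambda>(k, b). w k * Fract [:b:] 1) kb = Fract p 1"
    by (rule NA_common_denominator[of "K \<times> Gs" "\<lambda>(k, b). w k * Fract [:b:] 1"])
      (use Gs(1) K wNA in auto)
  have "\<exists>h. Fract s 1 * w k = Fract h 1 \<and> (\<forall>i. coeff h i \<in> colon R I)" if "k \<in> K" for k
  proof -
    have "\<exists>p\<in>poly_over R. Fract s 1 * (w k * Fract [:b:] 1) = Fract p 1" if "b \<in> Gs" for b
      using clear[of "(k, b)"] that \<open>k \<in> K\<close> by simp
    then obtain h where "Fract s 1 * w k = Fract h 1" "\<forall>i. coeff h i \<in> colon R I"
      by (rule clear_denominator_coeffs_in_colon[OF Gs(2) g0]) blast
    then show ?thesis
      by blast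
  qed
  then obtain h where "\<forall>k\<in>K. Fract s 1 * w k = Fract (h k) 1 \<and> (\<forall>i. coeff (h k) i \<in> colon R I)"
    by (metis bchoice)
  with s that show ?thesis
    by blast
qed

lemma one_in_ext_NA_mult_colonE:
  assumes "1 \<in> submod_mult NA_st (ext_NA R Rg st I) (colon NA_st (ext_NA R Rg st I))"
  obtains n :: nat and a w where "\<forall>k<n. a k \<in> I" "\<forall>k<n. w k \<in> colon NA_st (ext_NA R Rg st I)"
    "1 = (\<Sum>k<n. Fract [:a k:] 1 * w k)"
proof -
  obtain n :: nat and g w where g: "\<forall>k<n. g k \<in> (\<lambda>a. Fract [:a:] 1) ` I"
    and w: "\<forall>k<n. w k \<in> colon NA_st (ext_NA R Rg st I)" and one: "1 = (\<Sum>k<n. g k * w k)"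
    using assms unfolding ext_NA_def
    by (rule submod_mult_lin_comb_sum[OF is_submod_colon[OF is_subring_NA]]) blast
  have "\<forall>k. \<exists>a. k < n \<longrightarrow> a \<in> I \<and> g k = Fract [:a:] 1"
    using g by blast
  from choice[OF this] obtain a where a: "\<forall>k<n. a k \<in> I \<and> g k = Fract [:a k:] 1"
    by blast
  have "1 = (\<Sum>k<n. Fract [:a k:] 1 * w k)"
    unfolding one by (rule sum.cong) (simp_all add: a)
  then show ?thesis
    using that a w by blast
qed

lemma ext_NA_invertible_imp_N_star_coeffs:
  assumes I: "is_ideal R I" "I \<noteq> {0}" "fin_gen R I"
    and inv: "invertible_ideal NA_st (ext_NA R Rg st I)"
  obtains s where "s \<in> N_st" "\<And>i. coeff s i \<in> submod_mult R I (colon R I)"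
proof -
  obtain Gs where Gs: "finite Gs" "I = lin_comb R Gs"
    using I(3) unfolding fin_gen_def by blast
  obtain g0 where g0: "g0 \<in> Gs" "g0 \<noteq> 0"
    using I(2) Gs(2) lin_comb_nonzero_gen by metis
  have "1 \<in> submod_mult NA_st (ext_NA R Rg st I) (colon NA_st (ext_NA R Rg st I))"
    using inv subring_one[OF is_subring_NA] unfolding invertible_ideal_def by simp
  then obtain n :: nat and a w where a: "\<forall>k<n. a k \<in> I"
    and w: "\<forall>k<n. w k \<in> colon NA_st (ext_NA R Rg st I)" and one: "1 = (\<Sum>k<n. Fract [:a k:] 1 * w k)"
    by (rule one_in_ext_NA_mult_colonE) blast
  obtain s h where s: "s \<in> N_st"
    and h: "\<forall>k\<in>{..<n}. Fract s 1 * w k = Fract (h k) 1 \<and> (\<forall>i. coeff (h k) i \<in> colon R I)"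
    by (rule colon_ext_NA_clear_denominators[OF Gs g0, of "{..<n}" w]) (use w in auto)
  have "Fract s 1 = Fract s 1 * (\<Sum>k<n. Fract [:a k:] 1 * w k)"
    using one by simp
  also have "\<dots> = (\<Sum>k<n. Fract [:a k:] 1 * (Fract s 1 * w k))"
    unfolding sum_distrib_left by (rule sum.cong) (simp_all add: ac_simps)
  also have "\<dots> = Fract (\<Sum>k<n. smult (a k) (h k)) 1"
    unfolding Fract_sum[OF one_neq_zero] by (rule sum.cong) (simp_all add: h)
  finally have s_eq: "s = (\<Sum>k<n. smult (a k) (h k))"
    by (simp add: Fract_1_eq_iff)
  have "coeff s i \<in> submod_mult R I (colon R I)" for i
    unfolding s_eq coeff_sum coeff_smult submod_mult_def
    by (rule lin_comb_sum[OF R_subring], rule lin_comb_gen[OF R_subring]) (use a h in blast)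
  then show ?thesis
    using that s by blast
qed

lemma star_f_invertible_if_N_star_coeffs:
  assumes I: "hom_ideal R Rg I" "I \<noteq> {0}"
    and s: "s \<in> N_st" and coeffs: "\<And>i. coeff s i \<in> submod_mult R I (colon R I)"
  shows "star_f_invertible R st I"
proof -
  let ?E = "submod_mult R I (colon R I)"
  have Ii: "is_ideal R I" "hom_closed I"
    using I(1) hom_ideal_hom_closed unfolding hom_ideal_def by auto
  have E: "is_ideal R ?E"
    unfolding submod_mult_def by (rule is_ideal_lin_comb) (auto simp: colon_def mult.commute)
  have sp: "s \<in> poly_over R" "s \<noteq> 0" "st (content_A R Rg s) = st R"
    using s unfolding N_star_def by auto
  have "content_A R Rg s \<subseteq> ?E"
    by (rule content_A_subset[OF sp(1) E hom_closed_ideal_colon_mult[OF Ii I(2)] coeffs])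
  then have "st R \<subseteq> star_f R st ?E"
    using st_subset_star_f[OF _ nz_frac_ideal_of_ideal[OF nz_submod_content_A[OF sp(1,2)]]
        fin_gen_content_A[OF sp(1)]] is_ideal_content_A[OF sp(1)] sp(3)
    unfolding is_ideal_def by blast
  moreover have "star_f R st ?E \<subseteq> st R"
    using E star_f_subset_st_R unfolding is_ideal_def by blast
  moreover have "nz_frac_ideal R I"
    using nz_frac_ideal_of_ideal[OF nz_submod_ideal[OF Ii(1) I(2)]] Ii(1) unfolding is_ideal_def by blast
  ultimately show ?thesis
    unfolding star_f_invertible_def by blast
qed

end

theorem lemma2p5:
  fixes R :: "'k::field set" and Rg :: "'g::cancel_comm_monoid_add \<Rightarrow> 'k set"
    and st :: "'k set \<Rightarrow> 'k set" and I :: "'k set"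
  assumes "graded_domain R Rg"
    and "semistar R st"
    and "st R \<subset> hom_quot_field R Rg"
    and "hom_ideal R Rg I" and "I \<noteq> {0}" and "fin_gen R I"
  shows "star_f_invertible R st I \<longleftrightarrow> invertible_ideal (NA R Rg st) (ext_NA R Rg st I)"
proof -
  interpret graded_semistar R Rg st
    using assms(1,2) by (intro graded_semistar.intro graded_dom.intro graded_semistar_axioms.intro)
  have I: "is_ideal R I"
    using assms(4) unfolding hom_ideal_def by blast
  show ?thesis
  proof
    assume "star_f_invertible R st I"
    then obtain f where "f \<in> N_st" "\<And>i. coeff f i \<in> submod_mult R I (colon R I)"
      by (rule star_f_invertible_imp_N_star_coeffs[OF I]) blast
    then show "invertible_ideal (NA R Rg st) (ext_NA R Rg st I)"
      by (rule ext_NA_invertible_if_N_star_coeffs[OF I assms(5)])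
  next
    assume "invertible_ideal (NA R Rg st) (ext_NA R Rg st I)"
    then obtain s where "s \<in> N_st" "\<And>i. coeff s i \<in> submod_mult R I (colon R I)"
      by (rule ext_NA_invertible_imp_N_star_coeffs[OF I assms(5,6)]) blast
    then show "star_f_invertible R st I"
      by (rule star_f_invertible_if_N_star_coeffs[OF assms(4,5)])
  qed
qed

end
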